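(* For $\pi$ uniformly distributed on $Av_n(132)$, let $M(\pi)$ be the largest size of a permutation in $Av(231)\cap\{\tilde r_\pi(\pi_i):1\le i\le n\}$. Then the expected value of $M(\pi)$ is asymptotic to $\log_2(n)$ as $n\to\infty$.
   Context: $Av_n(\sigma)$ is the set of permutations of $\{1,\dots,n\}$ avoiding the pattern $\sigma$, and $Av(\sigma)=\bigcup_n Av_n(\sigma)$. For a permutation $\pi=\pi_1\cdots\pi_n$ and an entry $\pi_i$, $r_\pi(\pi_i)$ is the set of entries $\pi_k$ such that $\pi_k\le\pi_i$ and all entries of $\pi$ lying (in position) between $\pi_k$ and $\pi_i$ are $\le\pi_i$ (so $\pi_i\in r_\pi(\pi_i)$); $\tilde r_\pi(\pi_i)$ is the permutation obtained by taking the entries of $r_\pi(\pi_i)$ in their order of appearance in $\pi$ and standardizing them to $1,\dots,|r_\pi(\pi_i)|$. *)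

theory Defs
  imports Complex_Main "HOL-Library.Landau_Symbols"
begin

text \<open>Permutations of {1..n} are represented as lists of naturals (one-line notation);
positions are 0-based.\<close>

definition is_perm :: "nat \<Rightarrow> nat list \<Rightarrow> bool" where
  "is_perm n xs \<longleftrightarrow> distinct xs \<and> set xs = {1..n}"

definition order_iso :: "nat list \<Rightarrow> nat list \<Rightarrow> bool" where
  "order_iso ys zs \<longleftrightarrow> length ys = length zs \<and>
     (\<forall>i<length ys. \<forall>j<length ys. ys ! i < ys ! j \<longleftrightarrow> zs ! i < zs ! j)"

definition contains :: "nat list \<Rightarrow> nat list \<Rightarrow> bool" where
  "contains xs \<sigma> \<longleftrightarrow> (\<exists>ys \<in> set (subseqs xs). order_iso ys \<sigma>)"

definition Av_n :: "nat \<Rightarrow> nat list \<Rightarrow> nat list set" where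
  "Av_n n \<sigma> = {\<pi>. is_perm n \<pi> \<and> \<not> contains \<pi> \<sigma>}"

definition Av :: "nat list \<Rightarrow> nat list set" where
  "Av \<sigma> = (\<Union>n. Av_n n \<sigma>)"

text \<open>Positions of the entries of r_pi(pi_i).\<close>
definition r_pos :: "nat list \<Rightarrow> nat \<Rightarrow> nat set" where
  "r_pos \<pi> i = {k. k < length \<pi> \<and> \<pi> ! k \<le> \<pi> ! i \<and>
      (\<forall>j. min k i < j \<and> j < max k i \<longrightarrow> \<pi> ! j \<le> \<pi> ! i)}"

definition standardize :: "nat list \<Rightarrow> nat list" where
  "standardize xs = map (\<lambda>x. card {y \<in> set xs. y \<le> x}) xs"

definition r_tilde :: "nat list \<Rightarrow> nat \<Rightarrow> nat list" where
  "r_tilde \<pi> i = standardize (nths \<pi> (r_pos \<pi> i))"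

definition M :: "nat list \<Rightarrow> nat" where
  "M \<pi> = Max (insert 0 {length \<tau> | \<tau>. \<tau> \<in> Av [2,3,1] \<and>
                          (\<exists>i<length \<pi>. \<tau> = r_tilde \<pi> i)})"

definition EM :: "nat \<Rightarrow> real" where
  "EM n = (\<Sum>\<pi>\<in>Av_n n [1,3,2]. real (M \<pi>)) / real (card (Av_n n [1,3,2]))"

end

theory Submission
  imports Defs "HOL-Computational_Algebra.Formal_Power_Series" "HOL-Library.Sublist"
    "HOL-Real_Asymp.Real_Asymp" "HOL-Analysis.Convex"
begin

text \<open>
  Cutting a 132-avoiding permutation at its maximal entry, \<open>\<pi> = \<alpha> n \<beta>\<close>, every entry of \<open>\<alpha>\<close>
  exceeds every entry of \<open>\<beta>\<close>. Recursing into \<open>\<alpha>\<close> and \<open>\<beta>\<close> gives a bijection between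
  Av_n(132) and binary trees with \<open>n\<close> nodes, under which \<open>r_tilde \<pi> i\<close> is the permutation
  of the subtree rooted at the node of \<open>\<pi>\<^sub>i\<close>; it avoids 231 exactly when that subtree is a
  path (no node has two children). So \<open>M(\<pi>)\<close> is the size of the largest path
  subtree of a uniformly random binary tree with \<open>n\<close> nodes.

  The Catalan generating function shows that the trees with \<open>n\<close> nodes contain altogether
  \<open>2^(k-1) (n-k+1) C(n-k) \<approx> n 2^(-k) C(n)\<close> path subtrees with \<open>k\<close> nodes. Summing this first
  moment over \<open>k \<ge> log2 n\<close> gives \<open>E M \<le> log2 n + O(1)\<close>. For \<open>k \<approx> log2 n - 2 log2 (log2 n)\<close>
  the second factorial moment is asymptotically the square of the first, so by Cauchy-Schwarz a
  path subtree with \<open>k\<close> nodes exists with probability tending to one, and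
  \<open>E M \<ge> (1 - o(1)) log2 n\<close>.
\<close>

section \<open>Binary trees and Catalan numbers\<close>

datatype tree = Leaf | Node (lchild: tree) (rchild: tree)

definition trees :: "nat \<Rightarrow> tree set" where
  "trees n = {t. size t = n}"

lemma size_tree_eq_0_iff [simp]: "size t = 0 \<longleftrightarrow> t = Leaf"
  by (cases t) auto

lemma trees_0: "trees 0 = {Leaf}"
  by (auto simp: trees_def)

lemma trees_Suc: "trees (Suc n) = (\<Union>a\<le>n. (\<lambda>(l, r). Node l r) ` (trees a \<times> trees (n - a)))"
proof (intro set_eqI iffI)
  fix t assume "t \<in> trees (Suc n)"
  then obtain l r where "t = Node l r" "size l + size r = n"
    by (cases t) (auto simp: trees_def)
  then show "t \<in> (\<Union>a\<le>n. (\<lambda>(l, r). Node l r) ` (trees a \<times> trees (n - a)))"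
    by (auto simp: trees_def intro!: bexI[of _ "size l"] image_eqI[of _ _ "(l, r)"])
qed (auto simp: trees_def)

lemma finite_trees: "finite (trees n)"
proof (induction n rule: less_induct)
  case (less n)
  then show ?case
    by (cases n) (auto simp: trees_0 trees_Suc intro!: finite_imageI)
qed

lemma sum_trees_Suc:
  "(\<Sum>t\<in>trees (Suc n). f t) = (\<Sum>a\<le>n. \<Sum>l\<in>trees a. \<Sum>r\<in>trees (n - a). f (Node l r))"
proof -
  have "(\<Sum>t\<in>trees (Suc n). f t)
      = (\<Sum>a\<le>n. \<Sum>t\<in>(\<lambda>(l, r). Node l r) ` (trees a \<times> trees (n - a)). f t)"
    unfolding trees_Suc
    by (rule sum.UNION_disjoint) (auto simp: finite_trees, auto simp: trees_def)
  also have "\<dots> = (\<Sum>a\<le>n. \<Sum>p\<in>trees a \<times> trees (n - a). f (Node (fst p) (snd p)))"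
    by (rule sum.cong[OF refl], subst sum.reindex) (auto simp: inj_on_def case_prod_beta)
  also have "\<dots> = (\<Sum>a\<le>n. \<Sum>l\<in>trees a. \<Sum>r\<in>trees (n - a). f (Node l r))"
    by (rule sum.cong[OF refl], subst sum.cartesian_product) (auto simp: case_prod_beta)
  finally show ?thesis .
qed

lemma sum_trees_Suc_mult:
  fixes f g :: "tree \<Rightarrow> 'a::comm_semiring_1"
  shows "(\<Sum>t\<in>trees (Suc n). f (lchild t) * g (rchild t))
    = (\<Sum>a\<le>n. (\<Sum>l\<in>trees a. f l) * (\<Sum>r\<in>trees (n - a). g r))"
  by (simp add: sum_trees_Suc sum_product)

lemma trees_SucE:
  assumes "t \<in> trees (Suc n)"
  obtains l r where "t = Node l r" "size l + size r = n"
  using assms by (cases t) (auto simp: trees_def)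

definition catalan :: "nat \<Rightarrow> nat" where
  "catalan n = card (trees n)"

lemma catalan_0: "catalan 0 = 1"
  by (simp add: catalan_def trees_0)

lemma catalan_Suc: "catalan (Suc n) = (\<Sum>a\<le>n. catalan a * catalan (n - a))"
  using sum_trees_Suc[where f = "\<lambda>_. 1::nat" and n = n] by (simp add: catalan_def)

lemma catalan_1: "catalan (Suc 0) = 1"
  using catalan_Suc[of 0] by (simp add: catalan_0)

definition catalan_fps :: "real fps" where
  "catalan_fps = Abs_fps (\<lambda>n. real (catalan n))"

lemma catalan_fps_eq: "catalan_fps = 1 + fps_X * catalan_fps\<^sup>2"
proof (rule fps_ext)
  fix n show "fps_nth catalan_fps n = fps_nth (1 + fps_X * catalan_fps\<^sup>2) n"
  proof (cases n)
    case (Suc m)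
    have "fps_nth (fps_X * catalan_fps\<^sup>2) (Suc m) = fps_nth (catalan_fps * catalan_fps) m"
      by (simp only: fps_X_mult_nth power2_eq_square) simp
    also have "\<dots> = real (catalan (Suc m))"
      by (simp only: fps_mult_nth catalan_Suc atMost_atLeast0) (simp add: catalan_fps_def)
    finally show ?thesis using Suc by (simp add: catalan_fps_def)
  qed (simp add: catalan_fps_def catalan_0)
qed

text \<open>Differentiating the quadratic equation and eliminating \<open>catalan_fps\<^sup>2\<close> gives a linear ODE.\<close>
lemma catalan_fps_ode:
  "fps_X * (fps_deriv catalan_fps * (1 - fps_const 4 * fps_X))
    = 1 - catalan_fps + fps_const 2 * (fps_X * catalan_fps)"
proof -
  let ?c = catalan_fps
  have "fps_deriv ?c = ?c * ?c + 2 * fps_X * ?c * fps_deriv ?c"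
    by (subst catalan_fps_eq) (simp add: power2_eq_square algebra_simps)
  then have "fps_X * fps_deriv ?c * (1 - 4 * fps_X) = 1 - ?c + 2 * fps_X * ?c"
    using catalan_fps_eq unfolding power2_eq_square by algebra
  then show ?thesis by (simp add: numeral_fps_const mult.assoc)
qed

lemma catalan_Suc_Suc_ratio:
  "real (j + 3) * real (catalan (Suc (Suc j))) = real (4 * j + 6) * real (catalan (Suc j))"
proof -
  let ?c = catalan_fps and ?D = "fps_deriv catalan_fps"
  have lhs: "fps_nth (fps_X * (?D * (1 - fps_const 4 * fps_X))) (Suc (Suc j))
      = fps_nth ?D (Suc j) - 4 * fps_nth ?D j"
  proof -
    have "?D * (1 - fps_const 4 * fps_X) = ?D - fps_const 4 * (?D * fps_X)"
      by (simp add: algebra_simps)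
    then show ?thesis
      by (simp only: fps_X_mult_nth fps_sub_nth fps_mult_left_const_nth fps_X_mult_right_nth) simp
  qed
  have rhs: "fps_nth (1 - ?c + fps_const 2 * (fps_X * ?c)) (Suc (Suc j))
      = - fps_nth ?c (Suc (Suc j)) + 2 * fps_nth ?c (Suc j)"
    by (simp only: fps_add_nth fps_X_mult_nth fps_sub_nth fps_mult_left_const_nth) simp
  have "fps_nth ?D (Suc j) - 4 * fps_nth ?D j = - fps_nth ?c (Suc (Suc j)) + 2 * fps_nth ?c (Suc j)"
    using arg_cong[OF catalan_fps_ode, of "\<lambda>f. fps_nth f (Suc (Suc j))"] lhs rhs by simp
  then show ?thesis by (simp add: catalan_fps_def algebra_simps)
qed

lemma catalan_Suc_ratio: "real (j + 2) * real (catalan (Suc j)) = real (4 * j + 2) * real (catalan j)"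
proof (cases j)
  case (Suc i)
  then show ?thesis using catalan_Suc_Suc_ratio[of i] by (simp add: add.commute)
qed (simp add: catalan_0 catalan_1)

lemma catalan_pos: "catalan j > 0"
proof (induction j)
  case (Suc j)
  then have "real (j + 2) * real (catalan (Suc j)) > 0"
    unfolding catalan_Suc_ratio by simp
  then show ?case by (simp add: zero_less_mult_iff)
qed (simp add: catalan_0)

lemma catalan_Suc_le: "real (catalan (Suc j)) \<le> 4 * real (catalan j)"
proof -
  have "real (j + 2) * real (catalan (Suc j)) \<le> real (j + 2) * (4 * real (catalan j))"
    unfolding catalan_Suc_ratio
    using mult_right_mono[of "real (4 * j + 2)" "real (j + 2) * 4" "real (catalan j)"]
    by (simp add: algebra_simps)
  then show ?thesis by (rule mult_left_le_imp_le) simp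
qed

lemma catalan_Suc_ge:
  assumes "m \<le> j"
  shows "(4 - 6 / (real m + 2)) * real (catalan j) \<le> real (catalan (Suc j))"
proof -
  have "real (catalan (Suc j)) = (4 - 6 / (real j + 2)) * real (catalan j)"
    using catalan_Suc_ratio[of j] by (simp add: field_simps)
  moreover have "6 / (real j + 2) \<le> 6 / (real m + 2)"
    using assms by (intro divide_left_mono) auto
  ultimately show ?thesis by (auto intro: mult_right_mono)
qed

lemma catalan_Suc_ge_cube:
  "4 * (real j + 1)^3 * real (catalan j) \<le> (real j + 2)^3 * real (catalan (Suc j))"
proof -
  have ratio: "(4 * real j + 2) * real (catalan j) = (real j + 2) * real (catalan (Suc j))"
    using catalan_Suc_ratio[of j] by (simp add: algebra_simps)
  have "4 * (real j + 1)^3 \<le> (real j + 2)^2 * (4 * real j + 2)"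
    by (simp add: power2_eq_square power3_eq_cube algebra_simps)
  then have "4 * (real j + 1)^3 * real (catalan j) \<le> (real j + 2)^2 * (4 * real j + 2) * real (catalan j)"
    by (intro mult_right_mono) auto
  also have "\<dots> = (real j + 2)^2 * ((4 * real j + 2) * real (catalan j))"
    by (simp only: mult.assoc)
  also have "\<dots> = (real j + 2)^3 * real (catalan (Suc j))"
    by (simp add: ratio power3_eq_cube power2_eq_square)
  finally show ?thesis .
qed

lemma catalan_add_le: "real (catalan (m + k)) \<le> 4^k * real (catalan m)"
proof (induction k)
  case (Suc k)
  then show ?case using catalan_Suc_le[of "m + k"] by simp
qed simp

lemma catalan_add_ge_cube:
  "4^k * (real m + 1)^3 * real (catalan m) \<le> (real (m + k) + 1)^3 * real (catalan (m + k))"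
proof (induction k)
  case (Suc k)
  have "4^Suc k * (real m + 1)^3 * real (catalan m) \<le> 4 * ((real (m + k) + 1)^3 * real (catalan (m + k)))"
    using Suc by simp
  also have "\<dots> \<le> (real (m + k) + 2)^3 * real (catalan (Suc (m + k)))"
    using catalan_Suc_ge_cube[of "m + k"] by simp
  finally show ?case by (simp add: algebra_simps)
qed simp

lemma catalan_add_ge: "(4 - 6 / (real m + 2))^k * real (catalan m) \<le> real (catalan (m + k))"
proof (induction k)
  case (Suc k)
  have "6 / (real m + 2) \<le> 3" by (simp add: field_simps)
  then have "(4 - 6 / (real m + 2))^Suc k * real (catalan m) \<le> (4 - 6 / (real m + 2)) * real (catalan (m + k))"
    using Suc by (simp add: mult.assoc mult_left_mono)
  also have "\<dots> \<le> real (catalan (Suc (m + k)))" by (rule catalan_Suc_ge) simp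
  finally show ?case by simp
qed simp

section \<open>Path subtrees\<close>

fun is_path :: "tree \<Rightarrow> bool" where
  "is_path Leaf = True"
| "is_path (Node l r) \<longleftrightarrow> (l = Leaf \<or> r = Leaf) \<and> is_path l \<and> is_path r"

fun count_path_subtrees :: "nat \<Rightarrow> tree \<Rightarrow> nat" where
  "count_path_subtrees k Leaf = 0"
| "count_path_subtrees k (Node l r) = count_path_subtrees k l + count_path_subtrees k r
     + (if is_path (Node l r) \<and> size (Node l r) = k then 1 else 0)"

fun max_path_subtree :: "tree \<Rightarrow> nat" where
  "max_path_subtree Leaf = 0"
| "max_path_subtree (Node l r) = max (max_path_subtree l)
     (max (max_path_subtree r) (if is_path (Node l r) then size (Node l r) else 0))"

lemma count_path_subtrees_eq_0: "size t < k \<Longrightarrow> count_path_subtrees k t = 0"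
  by (induction t) auto

lemma count_path_subtrees_0: "count_path_subtrees 0 t = 0"
  by (induction t) auto

lemma count_path_subtrees_pos_if_path:
  "is_path t \<Longrightarrow> 1 \<le> k \<Longrightarrow> k \<le> size t \<Longrightarrow> 1 \<le> count_path_subtrees k t"
proof (induction t)
  case (Node l r)
  then show ?case
    by (cases "size (Node l r) = k") (auto simp: not_less_eq_eq)
qed simp

lemma count_path_subtrees_pos_iff:
  "1 \<le> count_path_subtrees k t \<longleftrightarrow> 1 \<le> k \<and> k \<le> max_path_subtree t"
proof (induction t)
  case (Node l r)
  have "1 \<le> count_path_subtrees k (Node l r) \<longleftrightarrow> 1 \<le> count_path_subtrees k l \<or>
     1 \<le> count_path_subtrees k r \<or> (is_path (Node l r) \<and> size (Node l r) = k)"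
    by auto
  also have "\<dots> \<longleftrightarrow> 1 \<le> k \<and> k \<le> max_path_subtree (Node l r)"
    using Node.IH count_path_subtrees_pos_if_path[of "Node l r" k]
    by (auto simp only: max_path_subtree.simps le_max_iff_disj split: if_splits) auto
  finally show ?case .
qed simp

lemma max_path_subtree_le_size: "max_path_subtree t \<le> size t"
  by (induction t) auto

definition path_trees :: "nat \<Rightarrow> tree set" where
  "path_trees n = {t \<in> trees n. is_path t}"

lemma card_path_trees: "1 \<le> k \<Longrightarrow> card (path_trees k) = 2 ^ (k - 1)"
proof (induction k rule: nat_induct_at_least)
  case base
  have "t \<in> path_trees 1 \<longleftrightarrow> t = Node Leaf Leaf" for t
    by (cases t) (auto simp: path_trees_def trees_def)
  then have "path_trees 1 = {Node Leaf Leaf}" by blast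
  then show ?case by simp
next
  case (Suc n)
  have "t \<in> path_trees (Suc n) \<longleftrightarrow> t \<in> Node Leaf ` path_trees n \<union> (\<lambda>l. Node l Leaf) ` path_trees n" for t
    using Suc(1) by (cases t) (auto simp: path_trees_def trees_def)
  then have split: "path_trees (Suc n) = Node Leaf ` path_trees n \<union> (\<lambda>l. Node l Leaf) ` path_trees n"
    by blast
  have disjoint: "Node Leaf ` path_trees n \<inter> (\<lambda>l. Node l Leaf) ` path_trees n = {}"
    using Suc(1) by (auto simp: path_trees_def trees_def)
  have "finite (path_trees n)"
    using finite_trees[of n] by (simp add: path_trees_def)
  then have "card (path_trees (Suc n)) = 2 * card (path_trees n)"
    unfolding split using disjoint by (simp add: card_Un_disjoint card_image inj_on_def)
  then show ?case using Suc by (cases n) auto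
qed

lemma sum_trees_indicator_path:
  "(\<Sum>t\<in>trees m. if is_path t \<and> m = k then 1 else 0) = (if m = k then card (path_trees m) else (0::nat))"
  by (simp add: path_trees_def finite_trees sum.inter_filter[symmetric])

lemma convolution_commute:
  fixes f g :: "nat \<Rightarrow> 'a::comm_semiring_1"
  shows "(\<Sum>a\<le>n. f a * g (n - a)) = (\<Sum>a\<le>n. g a * f (n - a))"
  by (rule sum.reindex_bij_witness[where i = "\<lambda>a. n - a" and j = "\<lambda>a. n - a"])
    (auto simp: mult.commute)

lemma convolution_shift:
  fixes f g :: "nat \<Rightarrow> 'a::comm_semiring_1"
  assumes "\<And>a. a < k \<Longrightarrow> f a = 0" "k \<le> n"
  shows "(\<Sum>a\<le>n. f a * g (n - a)) = (\<Sum>a\<le>n - k. f (a + k) * g (n - k - a))"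
proof -
  have "(\<Sum>a\<le>n. f a * g (n - a)) = (\<Sum>a\<in>{k..n}. f a * g (n - a))"
    by (rule sum.mono_neutral_right) (auto simp: assms)
  also have "\<dots> = (\<Sum>a\<le>n - k. f (a + k) * g (n - k - a))"
    by (rule sum.reindex_bij_witness[where i = "\<lambda>a. a + k" and j = "\<lambda>a. a - k"])
      (use assms in auto)
  finally show ?thesis .
qed

lemma catalan_conv_weighted:
  "2 * (\<Sum>a\<le>N. (a + 1) * catalan a * catalan (N - a)) = (N + 2) * catalan (N + 1)"
proof -
  let ?S = "\<Sum>a\<le>N. (a + 1) * catalan a * catalan (N - a)"
  have "?S = (\<Sum>a\<le>N. (N - a + 1) * (catalan a * catalan (N - a)))"
    using convolution_commute[where f = "\<lambda>a. (a + 1) * catalan a" and g = catalan]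
    by (simp only: mult_ac)
  then have "2 * ?S = ?S + (\<Sum>a\<le>N. (N - a + 1) * (catalan a * catalan (N - a)))"
    by simp
  also have "\<dots> = (\<Sum>a\<le>N. (a + 1) * (catalan a * catalan (N - a)) + (N - a + 1) * (catalan a * catalan (N - a)))"
    by (simp only: sum.distrib mult.assoc)
  also have "\<dots> = (\<Sum>a\<le>N. (N + 2) * (catalan a * catalan (N - a)))"
  proof (rule sum.cong)
    fix a assume "a \<in> {..N}"
    then have "(a + 1) + (N - a + 1) = N + 2" by simp
    then show "(a + 1) * (catalan a * catalan (N - a)) + (N - a + 1) * (catalan a * catalan (N - a))
        = (N + 2) * (catalan a * catalan (N - a))"
      by (metis add_mult_distrib)
  qed simp
  finally show ?thesis by (simp add: catalan_Suc sum_distrib_left)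
qed

text \<open>
  The total number of path subtrees with \<open>k\<close> nodes, and of ordered pairs of distinct ones,
  over all trees with \<open>n\<close> nodes: \<open>catalan n\<close> times the first and second factorial moments
  of \<open>count_path_subtrees k\<close> under the uniform distribution.
\<close>
definition path_count :: "nat \<Rightarrow> nat \<Rightarrow> nat" where
  "path_count n k = (\<Sum>t\<in>trees n. count_path_subtrees k t)"

definition path_pair_count :: "nat \<Rightarrow> nat \<Rightarrow> nat" where
  "path_pair_count n k = (\<Sum>t\<in>trees n. count_path_subtrees k t * (count_path_subtrees k t - 1))"

lemma path_count_eq_0: "n < k \<Longrightarrow> path_count n k = 0"
  by (simp add: path_count_def trees_def count_path_subtrees_eq_0)

lemma path_count_Suc:
  "path_count (Suc n) k = 2 * (\<Sum>a\<le>n. path_count a k * catalan (n - a))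
     + (if Suc n = k then 2 ^ (k - 1) else 0)"
proof -
  have node: "count_path_subtrees k t = count_path_subtrees k (lchild t) * 1 + 1 * count_path_subtrees k (rchild t)
      + (if is_path t \<and> Suc n = k then 1 else 0)" if "t \<in> trees (Suc n)" for t
    using that by (elim trees_SucE) auto
  have "path_count (Suc n) k = (\<Sum>t\<in>trees (Suc n). count_path_subtrees k (lchild t) * 1)
      + (\<Sum>t\<in>trees (Suc n). 1 * count_path_subtrees k (rchild t))
      + (\<Sum>t\<in>trees (Suc n). if is_path t \<and> Suc n = k then 1 else 0)"
    unfolding path_count_def sum.distrib[symmetric] by (rule sum.cong[OF refl node])
  also have "\<dots> = (\<Sum>a\<le>n. path_count a k * catalan (n - a))
      + (\<Sum>a\<le>n. catalan a * path_count (n - a) k) + (if Suc n = k then card (path_trees (Suc n)) else 0)"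
    unfolding sum_trees_Suc_mult[where f = "count_path_subtrees k" and g = "\<lambda>_. 1"]
      sum_trees_Suc_mult[where f = "\<lambda>_. 1" and g = "count_path_subtrees k"] sum_trees_indicator_path
    by (simp add: path_count_def catalan_def)
  finally show ?thesis
    by (simp add: convolution_commute[of catalan "\<lambda>a. path_count a k"] card_path_trees)
qed

lemma path_count_eq:
  "path_count n k = (if 1 \<le> k \<and> k \<le> n then 2 ^ (k - 1) * (n - k + 1) * catalan (n - k) else 0)"
proof (induction n rule: less_induct)
  case (less n)
  consider "k = 0" | "n = 0" | m where "k \<ge> 1" "n = Suc m"
    by (cases n; cases "k = 0") auto
  then show ?case
  proof cases
    case 1 then show ?thesis by (simp add: path_count_def count_path_subtrees_0)
  next
    case 2 then show ?thesis by (simp add: path_count_def trees_0)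
  next
    case (3 m)
    show ?thesis
    proof (cases "k \<le> m")
      case True
      then obtain d where d: "m = k + d" using le_Suc_ex by blast
      have "(\<Sum>a\<le>m. path_count a k * catalan (m - a)) = (\<Sum>a\<le>d. path_count (a + k) k * catalan (d - a))"
        using convolution_shift[of k "\<lambda>a. path_count a k" m catalan] True
        by (simp add: path_count_eq_0 d)
      also have "\<dots> = 2 ^ (k - 1) * (\<Sum>a\<le>d. (a + 1) * catalan a * catalan (d - a))"
        unfolding sum_distrib_left
        by (rule sum.cong) (use 3 d in \<open>simp_all add: less.IH algebra_simps\<close>)
      finally have "path_count n k = 2 ^ (k - 1) * (2 * (\<Sum>a\<le>d. (a + 1) * catalan a * catalan (d - a)))"
        using 3 True by (simp add: path_count_Suc)
      also have "\<dots> = 2 ^ (k - 1) * ((d + 2) * catalan (d + 1))"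
        by (simp only: catalan_conv_weighted)
      finally show ?thesis using 3 d by (simp add: algebra_simps)
    next
      case False
      then have "(\<Sum>a\<le>m. path_count a k * catalan (m - a)) = 0"
        by (intro sum.neutral) (auto simp: path_count_eq_0)
      then show ?thesis using 3 False by (simp add: path_count_Suc catalan_0)
    qed
  qed
qed

lemma path_count_shift: "1 \<le> k \<Longrightarrow> path_count (a + k) k = 2 ^ (k - 1) * ((a + 1) * catalan a)"
  by (simp add: path_count_eq algebra_simps)

lemma path_pair_count_Suc:
  "path_pair_count (Suc n) k = 2 * (\<Sum>a\<le>n. path_pair_count a k * catalan (n - a))
     + 2 * (\<Sum>a\<le>n. path_count a k * path_count (n - a) k)"
proof -
  have square_split: "(x + y) * (x + y - 1) = x * (x - 1) + y * (y - 1) + 2 * x * y" for x y :: nat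
    by (cases x; cases y) (simp_all add: algebra_simps)
  have node: "count_path_subtrees k t * (count_path_subtrees k t - 1)
      = count_path_subtrees k (lchild t) * (count_path_subtrees k (lchild t) - 1) * 1
        + 1 * (count_path_subtrees k (rchild t) * (count_path_subtrees k (rchild t) - 1))
        + 2 * (count_path_subtrees k (lchild t) * count_path_subtrees k (rchild t))"
    if "t \<in> trees (Suc n)" for t
    using that
  proof (elim trees_SucE)
    fix l r assume t: "t = Node l r" and size: "size l + size r = n"
    show ?thesis
    proof (cases "is_path t \<and> Suc n = k")
      case True
      then have "count_path_subtrees k l = 0" "count_path_subtrees k r = 0"
        using size by (auto intro!: count_path_subtrees_eq_0)
      then show ?thesis using t True size by simp
    next
      case False
      then have "count_path_subtrees k t = count_path_subtrees k l + count_path_subtrees k r"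
        using t size by auto
      then show ?thesis using t square_split[of "count_path_subtrees k l" "count_path_subtrees k r"]
        by (simp add: mult.assoc)
    qed
  qed
  let ?P = "\<lambda>t. count_path_subtrees k t * (count_path_subtrees k t - 1)"
  have "path_pair_count (Suc n) k = (\<Sum>t\<in>trees (Suc n). ?P (lchild t) * 1)
      + (\<Sum>t\<in>trees (Suc n). 1 * ?P (rchild t))
      + 2 * (\<Sum>t\<in>trees (Suc n). count_path_subtrees k (lchild t) * count_path_subtrees k (rchild t))"
    unfolding path_pair_count_def sum_distrib_left sum.distrib[symmetric] by (rule sum.cong[OF refl node])
  also have "\<dots> = (\<Sum>a\<le>n. path_pair_count a k * catalan (n - a))
      + (\<Sum>a\<le>n. catalan a * path_pair_count (n - a) k) + 2 * (\<Sum>a\<le>n. path_count a k * path_count (n - a) k)"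
    unfolding sum_trees_Suc_mult[where f = ?P and g = "\<lambda>_. 1"]
      sum_trees_Suc_mult[where f = "\<lambda>_. 1" and g = ?P]
      sum_trees_Suc_mult[where f = "count_path_subtrees k" and g = "count_path_subtrees k"]
    by (simp add: catalan_def path_count_def path_pair_count_def)
  finally show ?thesis
    by (simp add: convolution_commute[of catalan "\<lambda>a. path_pair_count a k"])
qed

lemma path_count_conv_path_count:
  assumes "1 \<le> k" "2 * k \<le> m"
  shows "(\<Sum>a\<le>m. path_count a k * path_count (m - a) k)
    = 4 ^ (k - 1) * (\<Sum>a\<le>m - 2 * k. (a + 1) * (m - 2 * k - a + 1) * catalan a * catalan (m - 2 * k - a))"
proof -
  let ?M = "m - 2 * k"
  have "(\<Sum>a\<le>m. path_count a k * path_count (m - a) k)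
      = (\<Sum>a\<le>m - k. path_count (a + k) k * path_count (m - k - a) k)"
    by (rule convolution_shift) (use assms in \<open>auto simp: path_count_eq_0\<close>)
  also have "\<dots> = (\<Sum>a\<le>m - k. path_count a k * path_count ((m - k - a) + k) k)"
    by (rule convolution_commute[where f = "\<lambda>a. path_count (a + k) k" and g = "\<lambda>a. path_count a k"])
  also have "\<dots> = (\<Sum>a\<le>?M. path_count (a + k) k * path_count ((?M - a) + k) k)"
    using convolution_shift[where f = "\<lambda>a. path_count a k" and g = "\<lambda>j. path_count (j + k) k"
        and k = k and n = "m - k"] assms
    by (simp add: path_count_eq_0 diff_diff_add mult_2)
  also have "\<dots> = (\<Sum>a\<le>?M. (2 ^ (k - 1) * 2 ^ (k - 1)) * ((a + 1) * (?M - a + 1) * catalan a * catalan (?M - a)))"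
    by (simp only: path_count_shift[OF assms(1)] mult_ac)
  also have "\<dots> = 4 ^ (k - 1) * (\<Sum>a\<le>?M. (a + 1) * (?M - a + 1) * catalan a * catalan (?M - a))"
    by (simp add: sum_distrib_left flip: power_mult_distrib)
  finally show ?thesis .
qed

lemma path_pair_count_eq:
  "path_pair_count n k = (if 1 \<le> k \<and> 2 * k \<le> n
     then 4 ^ (k - 1) * ((n - 2 * k + 1) * (n - 2 * k)) * catalan (n - 2 * k) else 0)"
  (is "_ = ?F n")
proof (induction n rule: less_induct)
  case (less n)
  consider "k = 0" | "n = 0" | m where "k \<ge> 1" "n = Suc m"
    by (cases n; cases "k = 0") auto
  then show ?case
  proof cases
    case 1 then show ?thesis by (simp add: path_pair_count_def count_path_subtrees_0)
  next
    case 2 then show ?thesis by (simp add: path_pair_count_def trees_0)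
  next
    case (3 m)
    have IH: "(\<Sum>a\<le>m. path_pair_count a k * catalan (m - a)) = (\<Sum>a\<le>m. ?F a * catalan (m - a))"
      using 3 by (intro sum.cong) (auto simp: less.IH)
    show ?thesis
    proof (cases "2 * k \<le> m")
      case True
      then obtain d where d: "m = 2 * k + d" using le_Suc_ex by blast
      let ?S1 = "\<Sum>a\<le>d. (a + 1) * a * catalan a * catalan (d - a)"
      let ?S2 = "\<Sum>a\<le>d. (a + 1) * (d - a + 1) * catalan a * catalan (d - a)"
      have "(\<Sum>a\<le>m. ?F a * catalan (m - a)) = (\<Sum>a\<le>d. ?F (a + 2 * k) * catalan (d - a))"
        using convolution_shift[of "2 * k" ?F m catalan] True by (simp add: d)
      also have "\<dots> = 4 ^ (k - 1) * ?S1"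
        using 3 by (simp add: sum_distrib_left mult.assoc)
      finally have pairs: "(\<Sum>a\<le>m. path_pair_count a k * catalan (m - a)) = 4 ^ (k - 1) * ?S1"
        using IH by simp
      have weights: "?S1 + ?S2 = (d + 1) * (\<Sum>a\<le>d. (a + 1) * catalan a * catalan (d - a))"
        unfolding sum.distrib[symmetric] sum_distrib_left
      proof (rule sum.cong)
        fix a assume "a \<in> {..d}"
        then obtain e where "d = a + e" using le_Suc_ex by auto
        then show "(a + 1) * a * catalan a * catalan (d - a) + (a + 1) * (d - a + 1) * catalan a * catalan (d - a)
            = (d + 1) * ((a + 1) * catalan a * catalan (d - a))"
          by (simp add: algebra_simps)
      qed simp
      have "path_pair_count n k = 4 ^ (k - 1) * (2 * (?S1 + ?S2))"
        unfolding 3(2) path_pair_count_Suc pairs path_count_conv_path_count[OF 3(1) True]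
        by (simp add: d distrib_left)
      also have "\<dots> = 4 ^ (k - 1) * ((d + 1) * ((d + 2) * catalan (d + 1)))"
        unfolding weights by (simp only: mult.left_commute[of 2] catalan_conv_weighted)
      finally show ?thesis using 3 d by (simp add: algebra_simps)
    next
      case False
      have "(\<Sum>a\<le>m. ?F a * catalan (m - a)) = 0" "(\<Sum>a\<le>m. path_count a k * path_count (m - a) k) = 0"
        using False by (auto intro!: sum.neutral simp: path_count_eq)
      then show ?thesis using 3 False IH by (simp add: path_pair_count_Suc)
    qed
  qed
qed

section \<open>Pattern containment\<close>

lemma sorted_wrt_map_minus_1: "sorted_wrt (<) xs \<Longrightarrow> \<forall>j\<in>set xs. j \<ge> 1 \<Longrightarrow> sorted_wrt (<) (map (\<lambda>j. j - (1::nat)) xs)"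
  by (induction xs) auto

lemma subseq_map_nth:
  "sorted_wrt (<) ix \<Longrightarrow> \<forall>i\<in>set ix. i < length xs \<Longrightarrow> subseq (map ((!) xs) ix) xs"
proof (induction xs arbitrary: ix)
  case Nil then show ?case by (cases "ix") auto
next
  case (Cons x xs)
  show ?case
  proof (cases "ix")
    case Nil then show ?thesis by simp
  next
    case (Cons i ixx)
    have pos: "\<forall>j\<in>set ixx. j > i" using Cons.prems(1) \<open>ix = i # ixx\<close> by simp
    have s': "sorted_wrt (<) (map (\<lambda>j. j - 1) ixx)"
      using Cons.prems(1) \<open>ix = i # ixx\<close> pos by (intro sorted_wrt_map_minus_1) auto
    show ?thesis
    proof (cases "i = 0")
      case True
      have b: "\<forall>j\<in>set (map (\<lambda>j. j - 1) ixx). j < length xs"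
        using Cons.prems(2) \<open>ix = i # ixx\<close> pos True by auto
      have m: "map ((!) (x # xs)) ix = x # map ((!) xs) (map (\<lambda>j. j - 1) ixx)"
        using pos True \<open>ix = i # ixx\<close> by (auto simp: nth_Cons')
      show ?thesis unfolding m using Cons.IH[OF s' b] by simp
    next
      case False
      have s2: "sorted_wrt (<) (map (\<lambda>j. j - 1) ix)"
        using Cons.prems(1) \<open>ix = i # ixx\<close> pos False by (intro sorted_wrt_map_minus_1) auto
      have b: "\<forall>j\<in>set (map (\<lambda>j. j - 1) ix). j < length xs"
        using Cons.prems(2) \<open>ix = i # ixx\<close> pos False by auto
      have m2: "map ((!) (x # xs)) ix = map ((!) xs) (map (\<lambda>j. j - 1) ix)"
        using pos False \<open>ix = i # ixx\<close> by (auto simp: nth_Cons')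
      show ?thesis unfolding m2 by (rule list_emb_Cons[OF Cons.IH[OF s2 b]])
    qed
  qed
qed

lemma subseq_obtain_indices:
  "subseq ys xs \<Longrightarrow> \<exists>ix. sorted_wrt (<) ix \<and> (\<forall>i\<in>set ix. i < length xs) \<and> ys = map ((!) xs) ix"
proof (induction rule: list_emb.induct)
  case (list_emb_Nil ys) then show ?case by (intro exI[of _ "[]"]) simp
next
  case (list_emb_Cons xs ys y)
  then obtain ix where "sorted_wrt (<) ix" "\<forall>i\<in>set ix. i < length ys" "xs = map ((!) ys) ix" by blast
  then show ?case by (intro exI[of _ "map Suc ix"]) (auto simp: sorted_wrt_map)
next
  case (list_emb_Cons2 x y xs ys)
  then obtain ix where "sorted_wrt (<) ix" "\<forall>i\<in>set ix. i < length ys" "xs = map ((!) ys) ix" by blast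
  moreover have "x = y" using list_emb_Cons2 by simp
  ultimately show ?case by (intro exI[of _ "0 # map Suc ix"]) (auto simp: sorted_wrt_map)
qed

lemma contains_iff_indices: "contains xs \<sigma> \<longleftrightarrow>
  (\<exists>ix. sorted_wrt (<) ix \<and> (\<forall>i\<in>set ix. i < length xs) \<and> order_iso (map ((!) xs) ix) \<sigma>)"
  unfolding contains_def using subseq_map_nth subseq_obtain_indices by fastforce

lemma order_iso_3: "order_iso [a,b,c] [x,y,z] \<longleftrightarrow>
  ((a < b) = (x < y)) \<and> ((b < a) = (y < x)) \<and> ((a < c) = (x < z)) \<and> ((c < a) = (z < x)) \<and>
  ((b < c) = (y < z)) \<and> ((c < b) = (z < y))"
proof -
  have all3: "(\<forall>i<Suc (Suc (Suc 0)). P i) = (P 0 \<and> P (Suc 0) \<and> P (Suc (Suc 0)))" for P :: "nat \<Rightarrow> bool"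
    by (auto simp: less_Suc_eq)
  show ?thesis unfolding order_iso_def by (simp add: all3) blast
qed

lemma contains_length_3_iff: "length \<sigma> = 3 \<Longrightarrow> contains xs \<sigma> \<longleftrightarrow>
  (\<exists>i j k. i < j \<and> j < k \<and> k < length xs \<and> order_iso [xs!i, xs!j, xs!k] \<sigma>)"
  unfolding contains_iff_indices
proof
  assume "length \<sigma> = 3" and "\<exists>ix. sorted_wrt (<) ix \<and> (\<forall>i\<in>set ix. i < length xs) \<and> order_iso (map ((!) xs) ix) \<sigma>"
  then obtain ix where h: "sorted_wrt (<) ix" "\<forall>i\<in>set ix. i < length xs" "order_iso (map ((!) xs) ix) \<sigma>"
    by blast
  then have "length ix = 3" using \<open>length \<sigma> = 3\<close> by (simp add: order_iso_def)
  then obtain i j k where "ix = [i,j,k]"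
    by (auto simp: numeral_3_eq_3 length_Suc_conv)
  then show "\<exists>i j k. i < j \<and> j < k \<and> k < length xs \<and> order_iso [xs!i, xs!j, xs!k] \<sigma>"
    using h by auto
next
  assume "\<exists>i j k. i < j \<and> j < k \<and> k < length xs \<and> order_iso [xs!i, xs!j, xs!k] \<sigma>"
  then obtain i j k where "i < j" "j < k" "k < length xs" "order_iso [xs!i, xs!j, xs!k] \<sigma>" by blast
  then show "\<exists>ix. sorted_wrt (<) ix \<and> (\<forall>i\<in>set ix. i < length xs) \<and> order_iso (map ((!) xs) ix) \<sigma>"
    by (intro exI[of _ "[i,j,k]"]) auto
qed

lemma contains_132_iff: "contains xs [1,3,2] \<longleftrightarrow>
  (\<exists>i j k. i < j \<and> j < k \<and> k < length xs \<and> xs!i < xs!k \<and> xs!k < xs!j)"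
proof -
  have "\<And>a b c::nat. order_iso [a,b,c] [1,3,2] \<longleftrightarrow> a < c \<and> c < b" by (auto simp: order_iso_3)
  then show ?thesis by (subst contains_length_3_iff) auto
qed

lemma contains_231_iff: "contains xs [2,3,1] \<longleftrightarrow>
  (\<exists>i j k. i < j \<and> j < k \<and> k < length xs \<and> xs!k < xs!i \<and> xs!i < xs!j)"
proof -
  have "\<And>a b c::nat. order_iso [a,b,c] [2,3,1] \<longleftrightarrow> c < a \<and> a < b" by (auto simp: order_iso_3)
  then show ?thesis by (subst contains_length_3_iff) auto
qed


lemma contains_append_left: "contains xs \<sigma> \<Longrightarrow> contains (ys @ xs) \<sigma>"
  unfolding contains_def by (meson in_set_subseqs subseq_drop_many)

lemma contains_append_right: "contains xs \<sigma> \<Longrightarrow> contains (xs @ ys) \<sigma>"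
  unfolding contains_def by (meson in_set_subseqs subseq_rev_drop_many)

lemma contains_map_strict_mono:
  assumes "strict_mono f" "contains xs \<sigma>"
  shows "contains (map f xs) \<sigma>"
proof -
  obtain ys where "subseq ys xs" "order_iso ys \<sigma>"
    using assms(2) by (auto simp: contains_def)
  moreover have "order_iso (map f ys) \<sigma>"
    using \<open>order_iso ys \<sigma>\<close> strict_mono_less[OF assms(1)] by (simp add: order_iso_def)
  ultimately show ?thesis
    unfolding contains_def by (meson in_set_subseqs subseq_map)
qed

section \<open>The bijection between binary trees and 132-avoiding permutations\<close>

fun tree_perm :: "tree \<Rightarrow> nat list" where
  "tree_perm Leaf = []"
| "tree_perm (Node l r) = map (\<lambda>x. x + size r) (tree_perm l) @ (size l + size r + 1) # tree_perm r"

lemma length_tree_perm [simp]: "length (tree_perm t) = size t"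
  by (induction t) auto

lemma set_tree_perm: "set (tree_perm t) = {1..size t}"
proof (induction t)
  case (Node l r)
  have "(\<lambda>x. x + size r) ` {1..size l} = {size r + 1..size l + size r}"
    by (auto simp: image_iff intro!: bexI[of _ "_ - size r"])
  then show ?case using Node by auto
qed simp

lemma distinct_tree_perm: "distinct (tree_perm t)"
proof (induction t)
  case (Node l r)
  have "inj (\<lambda>x. x + size r)" by (auto simp: inj_on_def)
  then show ?case using Node by (auto simp: distinct_map set_tree_perm inj_on_def)
qed simp

lemma is_perm_tree_perm: "is_perm (size t) (tree_perm t)"
  by (simp add: is_perm_def set_tree_perm distinct_tree_perm)

lemma tree_perm_nth_left: "p < size l \<Longrightarrow> tree_perm (Node l r) ! p = tree_perm l ! p + size r"
  by (simp add: nth_append)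

lemma tree_perm_nth_root: "tree_perm (Node l r) ! size l = size l + size r + 1"
  by (simp add: nth_append)

lemma tree_perm_nth_right: "size l < p \<Longrightarrow> tree_perm (Node l r) ! p = tree_perm r ! (p - size l - 1)"
  by (simp add: nth_append nth_Cons')

lemma tree_perm_left_range: "p < size l \<Longrightarrow> 1 \<le> tree_perm l ! p \<and> tree_perm l ! p \<le> size l"
  using set_tree_perm[of l] nth_mem[of p "tree_perm l"] by auto

lemma tree_perm_right_range: "size l < p \<Longrightarrow> p < size l + size r + 1 \<Longrightarrow> 1 \<le> tree_perm r ! (p - size l - 1) \<and> tree_perm r ! (p - size l - 1) \<le> size r"
  using set_tree_perm[of r] nth_mem[of "p - size l - 1" "tree_perm r"] by auto

lemma tree_perm_avoids_132: "\<not> contains (tree_perm t) [1,3,2]"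
proof (induction t)
  case Leaf then show ?case unfolding contains_132_iff by simp
next
  case (Node l r)
  show ?case
  proof
    assume "contains (tree_perm (Node l r)) [1,3,2]"
    then obtain i j k where ijk: "i < j" "j < k" "k < size l + size r + 1"
      "tree_perm (Node l r) ! i < tree_perm (Node l r) ! k" "tree_perm (Node l r) ! k < tree_perm (Node l r) ! j"
      unfolding contains_132_iff by auto
    let ?a = "size l" and ?b = "size r"
    consider "k < ?a" | "k = ?a" | "k > ?a" by arith
    then show False
    proof cases
      case 1
      then have "tree_perm l ! i < tree_perm l ! k" "tree_perm l ! k < tree_perm l ! j"
        using ijk tree_perm_nth_left[of _ l r] by auto
      then have "contains (tree_perm l) [1,3,2]" unfolding contains_132_iff using 1 ijk
        by (intro exI[of _ i] exI[of _ j] exI[of _ k]) auto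
      then show False using Node.IH(1) by simp
    next
      case 2
      have "tree_perm (Node l r) ! j \<le> ?a + ?b + 1"
        using set_tree_perm[of "Node l r"] nth_mem[of j "tree_perm (Node l r)"] ijk by auto
      then show False using ijk 2 tree_perm_nth_root[of l r] by simp
    next
      case 3
      have rk: "tree_perm (Node l r) ! k \<le> ?b"
        using tree_perm_nth_right[of l k r] tree_perm_right_range[of l k r] 3 ijk by auto
      consider "i < ?a" | "i = ?a" | "i > ?a" by arith
      then show False
      proof cases
        case 1 then show False using tree_perm_nth_left[of i l r] rk ijk by auto
      next
        case 2 then show False using tree_perm_nth_root[of l r] rk ijk by auto
      next
        case i3: 3
        have "tree_perm r ! (i - ?a - 1) < tree_perm r ! (k - ?a - 1)" "tree_perm r ! (k - ?a - 1) < tree_perm r ! (j - ?a - 1)"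
          using ijk tree_perm_nth_right[of l _ r] i3 by auto
        moreover have "i - ?a - 1 < j - ?a - 1" "j - ?a - 1 < k - ?a - 1" "k - ?a - 1 < ?b"
          using ijk i3 by auto
        ultimately have "contains (tree_perm r) [1,3,2]" unfolding contains_132_iff
          by (intro exI[of _ "i - ?a - 1"] exI[of _ "j - ?a - 1"] exI[of _ "k - ?a - 1"]) auto
        then show False using Node.IH(2) by simp
      qed
    qed
  qed
qed

lemma tree_perm_inj: "tree_perm t1 = tree_perm t2 \<Longrightarrow> t1 = t2"
proof (induction t1 arbitrary: t2)
  case Leaf then show ?case by (cases t2) auto
next
  case (Node l r)
  show ?case
  proof (cases t2)
    case Leaf then show ?thesis using Node.prems by simp
  next
    case (Node l' r')
    have len: "size l + size r = size l' + size r'"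
      using Node.prems \<open>t2 = Node l' r'\<close> length_tree_perm[of "Node l r"] length_tree_perm[of "Node l' r'"] by simp
    let ?p = "tree_perm (Node l r)"
    have d: "distinct ?p" by (rule distinct_tree_perm)
    have "?p ! size l = size l + size r + 1" by (rule tree_perm_nth_root)
    moreover have "?p ! size l' = size l + size r + 1"
      using tree_perm_nth_root[of l' r'] Node.prems \<open>t2 = Node l' r'\<close> len by simp
    moreover have "size l < length ?p" "size l' < length ?p" using len by auto
    ultimately have la: "size l = size l'" using d nth_eq_iff_index_eq by metis
    then have lb: "size r = size r'" using len by simp
    have "map (\<lambda>x. x + size r) (tree_perm l) = map (\<lambda>x. x + size r) (tree_perm l') \<and> tree_perm r = tree_perm r'"
      using Node.prems \<open>t2 = Node l' r'\<close> la lb by simp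
    then have "tree_perm l = tree_perm l'" "tree_perm r = tree_perm r'"
      using inj_map_eq_map[of "\<lambda>x. x + size r"] by (auto simp: inj_def)
    then show ?thesis using Node.IH \<open>t2 = Node l' r'\<close> by simp
  qed
qed

lemma downward_closed_eq_atLeastAtMost:
  assumes "finite D" "\<forall>y\<in>D. 1 \<le> y" "\<forall>y\<in>D. \<forall>x. 1 \<le> x \<longrightarrow> x \<le> y \<longrightarrow> x \<in> D"
  shows "D = {1..card D}"
proof (cases "D = {}")
  case True then show ?thesis by simp
next
  case False
  have e: "D = {1..Max D}"
  proof
    show "D \<subseteq> {1..Max D}" using assms(2) Max_ge[OF assms(1)] by auto
    show "{1..Max D} \<subseteq> D"
    proof
      fix x assume "x \<in> {1..Max D}"
      then show "x \<in> D" using assms(3) Max_in[OF assms(1) False] by auto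
    qed
  qed
  have c: "card D = Max D" by (subst e) simp
  show ?thesis by (simp only: c) (rule e)
qed

lemma not_contains_132_split:
  assumes "\<not> contains (\<alpha> @ c # \<beta>) [1,3,2]" "x \<in> set \<alpha>" "y \<in> set \<beta>" "x < y"
  shows "c \<le> y"
proof (rule ccontr)
  assume "\<not> c \<le> y"
  obtain i where i: "i < length \<alpha>" "\<alpha> ! i = x" using assms(2) by (auto simp: in_set_conv_nth)
  obtain j where j: "j < length \<beta>" "\<beta> ! j = y" using assms(3) by (auto simp: in_set_conv_nth)
  have "contains (\<alpha> @ c # \<beta>) [1,3,2]"
    unfolding contains_132_iff using i j assms(4) \<open>\<not> c \<le> y\<close>
    by (intro exI[of _ i] exI[of _ "length \<alpha>"] exI[of _ "Suc (length \<alpha> + j)"])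
      (auto simp: nth_append)
  then show False using assms(1) by simp
qed

lemma perm_avoiding_132_split_sets:
  assumes perm: "is_perm n (\<alpha> @ n # \<beta>)" and avoid: "\<not> contains (\<alpha> @ n # \<beta>) [1,3,2]"
  shows "set \<beta> = {1..length \<beta>}" "set \<alpha> = {length \<beta> + 1..n - 1}"
proof -
  have dist: "distinct \<beta>" "n \<notin> set \<alpha>" "n \<notin> set \<beta>" "set \<alpha> \<inter> set \<beta> = {}"
    and all: "set \<alpha> \<union> {n} \<union> set \<beta> = {1..n}"
    using perm by (auto simp: is_perm_def)
  have above: "y < x" if "x \<in> set \<alpha>" "y \<in> set \<beta>" for x y
  proof (rule ccontr)
    assume "\<not> y < x"
    moreover have "x \<noteq> y" using that dist(4) by blast
    ultimately have "n \<le> y" using not_contains_132_split[OF avoid that] by simp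
    moreover have "y \<in> {1..n}" "y \<noteq> n" using that all dist(3) by blast+
    ultimately show False by simp
  qed
  have "set \<beta> = {1..card (set \<beta>)}"
  proof (rule downward_closed_eq_atLeastAtMost)
    show "\<forall>y\<in>set \<beta>. 1 \<le> y" using all by auto
    show "\<forall>y\<in>set \<beta>. \<forall>x. 1 \<le> x \<longrightarrow> x \<le> y \<longrightarrow> x \<in> set \<beta>"
    proof (intro ballI allI impI)
      fix y x assume y: "y \<in> set \<beta>" and x: "1 \<le> x" "x \<le> y"
      have "y \<in> {1..n}" "y \<noteq> n" using y all dist(3) by blast+
      then have "x \<in> {1..n} - {n}" using x by auto
      then have "x \<in> set \<alpha> \<or> x \<in> set \<beta>" using all by blast
      then show "x \<in> set \<beta>" using above[of x y] y x by auto
    qed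
  qed simp
  then show set_\<beta>: "set \<beta> = {1..length \<beta>}"
    unfolding distinct_card[OF dist(1)] .
  have "set \<alpha> = (set \<alpha> \<union> {n} \<union> set \<beta>) - {n} - set \<beta>"
    using dist(2,4) by blast
  then have "set \<alpha> = {1..n} - {n} - set \<beta>"
    unfolding all .
  moreover have "{1..n} - {n} - {1..length \<beta>} = {length \<beta> + 1..n - 1}"
    by auto
  ultimately show "set \<alpha> = {length \<beta> + 1..n - 1}"
    unfolding set_\<beta> by simp
qed

lemma tree_perm_surj:
  "is_perm n \<pi> \<Longrightarrow> \<not> contains \<pi> [1,3,2] \<Longrightarrow> \<exists>t. size t = n \<and> tree_perm t = \<pi>"
proof (induction n arbitrary: \<pi> rule: less_induct)
  case (less n)
  have len: "length \<pi> = n" using less.prems(1) distinct_card[of \<pi>] by (simp add: is_perm_def)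
  show ?case
  proof (cases "n = 0")
    case True then show ?thesis using len by (intro exI[of _ Leaf]) simp
  next
    case False
    then have "n \<in> set \<pi>" using less.prems(1) by (auto simp: is_perm_def)
    then obtain p where p: "p < n" "\<pi> ! p = n"
      using len by (auto simp: in_set_conv_nth)
    define \<alpha>' \<beta> where "\<alpha>' = take p \<pi>" and "\<beta> = drop (Suc p) \<pi>"
    define b where "b = length \<beta>"
    have \<pi>: "\<pi> = \<alpha>' @ n # \<beta>"
      unfolding \<alpha>'_def \<beta>_def using id_take_nth_drop[of p \<pi>] p len by simp
    have lengths: "length \<alpha>' = p" "p + b + 1 = n" using p len by (auto simp: \<alpha>'_def \<beta>_def b_def)
    have sets: "set \<beta> = {1..b}" "set \<alpha>' = {b + 1..n - 1}"
      using perm_avoiding_132_split_sets less.prems unfolding \<pi> b_def by auto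
    have dist: "distinct \<alpha>'" "distinct \<beta>" using less.prems(1) by (auto simp: \<pi> is_perm_def)
    define \<alpha> where "\<alpha> = map (\<lambda>x. x - b) \<alpha>'"
    have \<alpha>': "\<alpha>' = map (\<lambda>x. x + b) \<alpha>"
      unfolding \<alpha>_def map_map by (rule map_idI[symmetric]) (use sets in auto)
    have "set \<alpha> = {1..p}"
    proof -
      have "(\<lambda>x. x - b) ` {b + 1..n - 1} = {1..p}"
        using lengths by (auto simp: image_iff intro!: bexI[of _ "_ + b"])
      then show ?thesis by (simp add: \<alpha>_def sets)
    qed
    moreover have "distinct \<alpha>" using dist(1) by (simp add: \<alpha>' distinct_map)
    ultimately have perm: "is_perm p \<alpha>" "is_perm b \<beta>"
      using sets dist by (simp_all add: is_perm_def)
    have "strict_mono (\<lambda>x::nat. x + b)" by (simp add: strict_mono_def)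
    then have "\<not> contains \<alpha> [1,3,2]"
      using less.prems(2) contains_map_strict_mono contains_append_right unfolding \<pi> \<alpha>' by blast
    moreover have "(\<alpha>' @ [n]) @ \<beta> = \<pi>" by (simp add: \<pi>)
    then have "\<not> contains \<beta> [1,3,2]"
      using less.prems(2) contains_append_left[of \<beta> "[1,3,2]" "\<alpha>' @ [n]"] by argo
    ultimately have avoid: "\<not> contains \<alpha> [1,3,2]" "\<not> contains \<beta> [1,3,2]" .
    have "p < n" "b < n" using lengths by auto
    then obtain tl tr where "size tl = p" "tree_perm tl = \<alpha>" "size tr = b" "tree_perm tr = \<beta>"
      using less.IH[OF _ perm(1) avoid(1)] less.IH[OF _ perm(2) avoid(2)] by blast
    then have "size (Node tl tr) = n \<and> tree_perm (Node tl tr) = \<pi>"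
      using lengths by (simp add: \<pi> \<alpha>')
    then show ?thesis by blast
  qed
qed

lemma bij_betw_tree_perm: "bij_betw tree_perm (trees n) (Av_n n [1,3,2])"
proof (rule bij_betwI')
  show "\<And>x. x \<in> trees n \<Longrightarrow> tree_perm x \<in> Av_n n [1,3,2]"
    using is_perm_tree_perm tree_perm_avoids_132 by (auto simp: trees_def Av_n_def)
  show "\<And>y. y \<in> Av_n n [1,3,2] \<Longrightarrow> \<exists>x\<in>trees n. y = tree_perm x"
    using tree_perm_surj by (fastforce simp: trees_def Av_n_def)
qed (use tree_perm_inj in blast)

section \<open>The entries \<open>r_tilde\<close> of a tree permutation\<close>

declare tree_perm.simps(2) [simp del]

lemma tree_perm_nth_bound: "p < size t \<Longrightarrow> 1 \<le> tree_perm t ! p \<and> tree_perm t ! p \<le> size t"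
  using set_tree_perm[of t] nth_mem[of p "tree_perm t"] by auto

lemma r_pos_map_strict_mono:
  assumes "strict_mono f" "i < length xs"
  shows "r_pos (map f xs) i = r_pos xs i"
  using assms(2) strict_mono_less_eq[OF assms(1)] by (auto simp: r_pos_def)

text \<open>An entry larger than \<open>\<pi>\<^sub>i\<close> cuts \<open>r\<^sub>\<pi>(\<pi>\<^sub>i)\<close> off from the other side.\<close>
lemma r_pos_append_left:
  assumes "i < length ys" "ys ! i < c"
  shows "r_pos (ys @ c # zs) i = r_pos ys i"
proof (intro set_eqI iffI)
  fix k assume k: "k \<in> r_pos (ys @ c # zs) i"
  have "k < length ys"
  proof (rule ccontr)
    assume "\<not> k < length ys"
    then have "length ys = k \<or> (min k i < length ys \<and> length ys < max k i)"
      using assms(1) by auto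
    then have "(ys @ c # zs) ! length ys \<le> (ys @ c # zs) ! i"
      using k by (auto simp: r_pos_def)
    then show False using assms by (simp add: nth_append)
  qed
  moreover have "j < length ys" if "j < max k i" for j
    using that \<open>k < length ys\<close> assms(1) by simp
  ultimately show "k \<in> r_pos ys i"
    using k assms(1) by (auto simp: r_pos_def nth_append)
qed (use assms(1) in \<open>auto simp: r_pos_def nth_append\<close>)

lemma r_pos_append_right:
  assumes "i < length zs" "zs ! i < c"
  shows "r_pos (ys @ c # zs) (length ys + 1 + i) = (+) (length ys + 1) ` r_pos zs i"
proof (intro set_eqI iffI)
  let ?xs = "ys @ c # zs" and ?i = "length ys + 1 + i"
  have shift: "?xs ! (length ys + 1 + j) = zs ! j" for j
    by (simp add: nth_append)
  fix k assume k: "k \<in> r_pos ?xs ?i"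
  then have between: "\<forall>j. min k ?i < j \<and> j < max k ?i \<longrightarrow> ?xs ! j \<le> ?xs ! ?i"
    by (simp add: r_pos_def)
  have "length ys < k"
  proof (rule ccontr)
    assume "\<not> length ys < k"
    then have "length ys = k \<or> (min k ?i < length ys \<and> length ys < max k ?i)"
      by auto
    then have "?xs ! length ys \<le> ?xs ! ?i"
      using k between by (auto simp: r_pos_def)
    then show False using assms shift[of i] by (simp add: nth_append)
  qed
  define k' where "k' = k - (length ys + 1)"
  have k': "k = length ys + 1 + k'"
    using \<open>length ys < k\<close> by (simp add: k'_def)
  have "k' \<in> r_pos zs i"
    unfolding r_pos_def
  proof (intro CollectI conjI allI impI)
    show "k' < length zs" "zs ! k' \<le> zs ! i"
      using k unfolding k' r_pos_def by (auto simp: nth_append)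
    fix j assume "min k' i < j \<and> j < max k' i"
    then have "min k ?i < length ys + 1 + j \<and> length ys + 1 + j < max k ?i"
      unfolding k' by auto
    then show "zs ! j \<le> zs ! i"
      using between[rule_format, of "length ys + 1 + j"] by (simp only: shift)
  qed
  then show "k \<in> (+) (length ys + 1) ` r_pos zs i"
    unfolding k' by blast
next
  let ?xs = "ys @ c # zs" and ?i = "length ys + 1 + i"
  have shift: "?xs ! (length ys + 1 + j) = zs ! j" for j
    by (simp add: nth_append)
  fix k assume "k \<in> (+) (length ys + 1) ` r_pos zs i"
  then obtain k' where k': "k = length ys + 1 + k'" "k' \<in> r_pos zs i"
    by blast
  then have between: "\<forall>j. min k' i < j \<and> j < max k' i \<longrightarrow> zs ! j \<le> zs ! i"
    by (simp add: r_pos_def)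
  show "k \<in> r_pos ?xs ?i"
    unfolding r_pos_def
  proof (intro CollectI conjI allI impI)
    show "k < length ?xs" "?xs ! k \<le> ?xs ! ?i"
      using k' unfolding r_pos_def by (auto simp: nth_append)
    fix j assume j: "min k ?i < j \<and> j < max k ?i"
    define j' where "j' = j - (length ys + 1)"
    have "j = length ys + 1 + j'" "min k' i < j' \<and> j' < max k' i"
      using j unfolding k'(1) j'_def by auto
    then show "?xs ! j \<le> ?xs ! ?i"
      using between[rule_format, of j'] by (simp only: shift)
  qed
qed

lemma r_pos_tree_perm_left:
  assumes "i < size l"
  shows "r_pos (tree_perm (Node l r)) i = r_pos (tree_perm l) i"
proof -
  have "strict_mono (\<lambda>x::nat. x + size r)" by (simp add: strict_mono_def)
  moreover have "tree_perm l ! i \<le> size l" using tree_perm_nth_bound[OF assms] by simp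
  ultimately show ?thesis
    using assms by (simp add: tree_perm.simps(2) r_pos_append_left r_pos_map_strict_mono)
qed

lemma r_pos_tree_perm_root: "r_pos (tree_perm (Node l r)) (size l) = {..<size l + size r + 1}"
proof -
  have "\<And>k. k < size (Node l r) \<Longrightarrow> tree_perm (Node l r) ! k \<le> size l + size r + 1"
    using tree_perm_nth_bound[of _ "Node l r"] by simp
  then show ?thesis by (auto simp: r_pos_def tree_perm_nth_root)
qed

lemma r_pos_tree_perm_right:
  assumes "size l < i" "i < size l + size r + 1"
  shows "r_pos (tree_perm (Node l r)) i = (+) (size l + 1) ` r_pos (tree_perm r) (i - size l - 1)"
proof -
  define j where "j = i - size l - 1"
  have i: "i = size l + 1 + j" and j: "j < size r"
    using assms by (auto simp: j_def)
  have "tree_perm r ! j < size l + size r + 1"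
    using tree_perm_nth_bound[OF j] by simp
  then have "r_pos (tree_perm (Node l r)) (size l + 1 + j) = (+) (size l + 1) ` r_pos (tree_perm r) j"
    using r_pos_append_right[of j "tree_perm r" "size l + size r + 1" "map (\<lambda>x. x + size r) (tree_perm l)"] j
    by (simp add: tree_perm.simps(2))
  then show ?thesis
    unfolding i by simp
qed

lemma standardize_map_add: "standardize (map (\<lambda>x. x + c) xs) = standardize xs"
proof -
  have "card {y \<in> set (map (\<lambda>x. x + c) xs). y \<le> x + c} = card {y \<in> set xs. y \<le> x}" for x
  proof -
    have "{y \<in> set (map (\<lambda>x. x + c) xs). y \<le> x + c} = (\<lambda>x. x + c) ` {y \<in> set xs. y \<le> x}" by auto
    then show ?thesis by (simp add: card_image inj_on_def)
  qed
  then show ?thesis by (simp add: standardize_def)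
qed

lemma standardize_perm: "is_perm n xs \<Longrightarrow> standardize xs = xs"
  unfolding standardize_def
proof (rule map_idI)
  fix x assume "is_perm n xs" "x \<in> set xs"
  then have "set xs = {1..n}" "x \<in> {1..n}" by (auto simp: is_perm_def)
  then have "{y \<in> set xs. y \<le> x} = {1..x}" by auto
  then show "card {y \<in> set xs. y \<le> x} = x" by simp
qed

lemma r_tilde_tree_perm_left:
  "i < size l \<Longrightarrow> r_tilde (tree_perm (Node l r)) i = r_tilde (tree_perm l) i"
proof -
  assume i: "i < size l"
  let ?I = "r_pos (tree_perm l) i"
  have sub: "?I \<subseteq> {..<size l}" by (auto simp: r_pos_def)
  have "nths (tree_perm (Node l r)) ?I = map (\<lambda>x. x + size r) (nths (tree_perm l) ?I)"
  proof -
    have "{j. j + size l \<in> ?I} = {}" using sub by auto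
    then show ?thesis by (simp add: nths_append nths_map tree_perm.simps(2))
  qed
  then show ?thesis by (simp add: r_tilde_def r_pos_tree_perm_left[OF i] standardize_map_add)
qed

lemma r_tilde_tree_perm_root: "r_tilde (tree_perm (Node l r)) (size l) = tree_perm (Node l r)"
proof -
  have "nths (tree_perm (Node l r)) {..<size l + size r + 1} = tree_perm (Node l r)"
    by (simp only: nths_upt_eq_take) simp
  then show ?thesis using standardize_perm[OF is_perm_tree_perm[of "Node l r"]]
    by (simp only: r_tilde_def r_pos_tree_perm_root)
qed

lemma r_tilde_tree_perm_right: "size l < i \<Longrightarrow> i < size l + size r + 1 \<Longrightarrow>
   r_tilde (tree_perm (Node l r)) i = r_tilde (tree_perm r) (i - size l - 1)"
proof -
  assume i: "size l < i" "i < size l + size r + 1"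
  have "drop (size l + 1) (tree_perm (Node l r)) = tree_perm r" by (simp add: tree_perm.simps(2))
  then have "nths (tree_perm (Node l r)) ((+) (size l + 1) ` r_pos (tree_perm r) (i - size l - 1))
     = nths (tree_perm r) (r_pos (tree_perm r) (i - size l - 1))"
    by (metis nths_drop)
  then show ?thesis by (simp add: r_tilde_def r_pos_tree_perm_right[OF i])
qed

definition r_tilde_set :: "nat list \<Rightarrow> nat list set" where
  "r_tilde_set p = r_tilde p ` {..<length p}"

lemma r_tilde_set_tree_perm_Node:
  "r_tilde_set (tree_perm (Node l r))
    = r_tilde_set (tree_perm l) \<union> {tree_perm (Node l r)} \<union> r_tilde_set (tree_perm r)"
proof -
  let ?p = "tree_perm (Node l r)" and ?a = "size l" and ?b = "size r"
  have U: "{..<?a + ?b + 1} = {..<?a} \<union> {?a} \<union> {?a<..<?a + ?b + 1}" by auto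
  have left: "r_tilde ?p ` {..<?a} = r_tilde (tree_perm l) ` {..<?a}"
    by (rule image_cong) (auto simp: r_tilde_tree_perm_left)
  have right: "r_tilde ?p ` {?a<..<?a + ?b + 1} = r_tilde (tree_perm r) ` {..<?b}"
  proof
    show "r_tilde ?p ` {?a<..<?a + ?b + 1} \<subseteq> r_tilde (tree_perm r) ` {..<?b}"
      using r_tilde_tree_perm_right[of l _ r] by force
    show "r_tilde (tree_perm r) ` {..<?b} \<subseteq> r_tilde ?p ` {?a<..<?a + ?b + 1}"
    proof
      fix x assume "x \<in> r_tilde (tree_perm r) ` {..<?b}"
      then obtain j where j: "j < ?b" "x = r_tilde (tree_perm r) j" by auto
      then have "x = r_tilde ?p (j + ?a + 1)" using r_tilde_tree_perm_right[of l "j + ?a + 1" r] by simp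
      moreover have "j + ?a + 1 \<in> {?a<..<?a + ?b + 1}" using j by simp
      ultimately show "x \<in> r_tilde ?p ` {?a<..<?a + ?b + 1}" by blast
    qed
  qed
  have size: "size (Node l r) = ?a + ?b + 1" by simp
  show ?thesis unfolding r_tilde_set_def length_tree_perm size U image_Un left right
    by (simp add: r_tilde_tree_perm_root)
qed

lemma M_eq_Max_r_tilde_set: "M p = Max (insert 0 (length ` (Av [2,3,1] \<inter> r_tilde_set p)))"
proof -
  have "{length \<tau> | \<tau>. \<tau> \<in> Av [2,3,1] \<and> (\<exists>i<length p. \<tau> = r_tilde p i)} = length ` (Av [2,3,1] \<inter> r_tilde_set p)"
    by (auto simp: r_tilde_set_def)
  then show ?thesis by (simp add: M_def)
qed

lemma Max_insert_0_Un: "finite X \<Longrightarrow> finite Y \<Longrightarrow>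
   Max (insert (0::nat) (X \<union> Y)) = max (Max (insert 0 X)) (Max (insert 0 Y))"
proof -
  assume "finite X" "finite Y"
  have "insert (0::nat) (X \<union> Y) = insert 0 X \<union> insert 0 Y" by auto
  then show ?thesis using \<open>finite X\<close> \<open>finite Y\<close> by (simp only:) (rule Max.union, auto)
qed

lemma is_perm_in_Av_iff: "is_perm n p \<Longrightarrow> p \<in> Av \<sigma> \<longleftrightarrow> \<not> contains p \<sigma>"
  by (auto simp: Av_def Av_n_def)

lemma contains_231_tree_perm_NodeD:
  assumes "contains (tree_perm (Node l r)) [2,3,1]"
  shows "(l \<noteq> Leaf \<and> r \<noteq> Leaf) \<or> contains (tree_perm l) [2,3,1] \<or> contains (tree_perm r) [2,3,1]"
proof -
  let ?p = "tree_perm (Node l r)" and ?a = "size l" and ?b = "size r"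
  obtain i j k where ijk: "i < j" "j < k" "k < ?a + ?b + 1" "?p ! k < ?p ! i" "?p ! i < ?p ! j"
    using assms unfolding contains_231_iff by auto
  have pj: "?p ! j \<le> ?a + ?b + 1" using tree_perm_nth_bound[of j "Node l r"] ijk by simp
  show "(l \<noteq> Leaf \<and> r \<noteq> Leaf) \<or> contains (tree_perm l) [2,3,1] \<or> contains (tree_perm r) [2,3,1]"
  proof (cases "l = Leaf")
    case True
    then have a0: "?a = 0" by simp
    have "i \<noteq> 0"
    proof
      assume "i = 0"
      then have "?p ! i = ?a + ?b + 1" using tree_perm_nth_root[of l r] a0 by simp
      then show False using ijk pj by simp
    qed
    then have "?a < i" using a0 by simp
    then have "tree_perm r ! (k - ?a - 1) < tree_perm r ! (i - ?a - 1)" "tree_perm r ! (i - ?a - 1) < tree_perm r ! (j - ?a - 1)"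
      using ijk tree_perm_nth_right[of l _ r] by auto
    moreover have "i - ?a - 1 < j - ?a - 1" "j - ?a - 1 < k - ?a - 1" "k - ?a - 1 < length (tree_perm r)"
      using ijk \<open>?a < i\<close> by auto
    ultimately have "contains (tree_perm r) [2,3,1]" unfolding contains_231_iff
      by (intro exI[of _ "i - ?a - 1"] exI[of _ "j - ?a - 1"] exI[of _ "k - ?a - 1"]) auto
    then show ?thesis by simp
  next
    case False
    show ?thesis
    proof (cases "r = Leaf")
      case True
      then have b0: "?b = 0" by simp
      have pi: "?p ! i \<le> ?a + ?b + 1" using tree_perm_nth_bound[of i "Node l r"] ijk by simp
      have "k \<noteq> ?a" using ijk pi tree_perm_nth_root[of l r] by auto
      then have "k < ?a" using ijk b0 by simp
      then have "tree_perm l ! k < tree_perm l ! i" "tree_perm l ! i < tree_perm l ! j"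
        using ijk tree_perm_nth_left[of _ l r] by auto
      then have "contains (tree_perm l) [2,3,1]" unfolding contains_231_iff using ijk \<open>k < ?a\<close>
        by (intro exI[of _ i] exI[of _ j] exI[of _ k]) auto
      then show ?thesis by simp
    next
      case False
      then show ?thesis using \<open>l \<noteq> Leaf\<close> by simp
    qed
  qed
qed

lemma contains_231_tree_perm_NodeI:
  assumes "(l \<noteq> Leaf \<and> r \<noteq> Leaf) \<or> contains (tree_perm l) [2,3,1] \<or> contains (tree_perm r) [2,3,1]"
  shows "contains (tree_perm (Node l r)) [2,3,1]"
proof -
  let ?p = "tree_perm (Node l r)" and ?a = "size l" and ?b = "size r"
  consider "l \<noteq> Leaf" "r \<noteq> Leaf" | "contains (tree_perm l) [2,3,1]" | "contains (tree_perm r) [2,3,1]"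
    using assms by blast
  then show ?thesis
  proof cases
    case 1
    have a: "?a \<ge> 1" "?b \<ge> 1" using 1 by (cases l; simp; cases r; simp)+
    have "?p ! 0 = tree_perm l ! 0 + ?b" using tree_perm_nth_left[of 0 l r] a by simp
    moreover have "1 \<le> tree_perm l ! 0" using tree_perm_left_range[of 0 l] a by simp
    moreover have "?p ! (?a + 1) \<le> ?b" using tree_perm_nth_right[of l "?a + 1" r] tree_perm_right_range[of l "?a + 1" r] a by simp
    moreover have "tree_perm l ! 0 \<le> ?a" using tree_perm_left_range[of 0 l] a by simp
    ultimately show ?thesis unfolding contains_231_iff using a tree_perm_nth_root[of l r]
      by (intro exI[of _ 0] exI[of _ ?a] exI[of _ "?a + 1"]) auto
  next
    case 2
    then obtain i j k where ijk: "i < j" "j < k" "k < ?a" "tree_perm l ! k < tree_perm l ! i" "tree_perm l ! i < tree_perm l ! j"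
      unfolding contains_231_iff by auto
    then show ?thesis unfolding contains_231_iff using tree_perm_nth_left[of _ l r]
      by (intro exI[of _ i] exI[of _ j] exI[of _ k]) auto
  next
    case 3
    then obtain i j k where ijk: "i < j" "j < k" "k < ?b" "tree_perm r ! k < tree_perm r ! i" "tree_perm r ! i < tree_perm r ! j"
      unfolding contains_231_iff by auto
    then show ?thesis unfolding contains_231_iff using tree_perm_nth_right[of l _ r]
      by (intro exI[of _ "i + ?a + 1"] exI[of _ "j + ?a + 1"] exI[of _ "k + ?a + 1"]) auto
  qed
qed

lemma is_path_iff_avoids_231: "is_path t \<longleftrightarrow> \<not> contains (tree_perm t) [2,3,1]"
proof (induction t)
  case Leaf then show ?case unfolding contains_231_iff by simp
next
  case (Node l r)
  then show ?case
    using contains_231_tree_perm_NodeD[of l r] contains_231_tree_perm_NodeI[of l r] by auto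
qed

lemma finite_r_tilde_set: "finite (r_tilde_set p)" by (simp add: r_tilde_set_def)

lemma M_tree_perm: "M (tree_perm t) = max_path_subtree t"
proof (induction t)
  case Leaf then show ?case by (simp add: M_eq_Max_r_tilde_set r_tilde_set_def)
next
  case (Node l r)
  let ?p = "tree_perm (Node l r)"
  let ?A = "length ` (Av [2,3,1] \<inter> r_tilde_set (tree_perm l))"
  let ?B = "length ` (Av [2,3,1] \<inter> {?p})"
  let ?C = "length ` (Av [2,3,1] \<inter> r_tilde_set (tree_perm r))"
  have e: "length ` (Av [2,3,1] \<inter> r_tilde_set ?p) = ?A \<union> (?B \<union> ?C)"
    unfolding r_tilde_set_tree_perm_Node by blast
  have s: "Max (insert 0 ?B) = (if is_path (Node l r) then size (Node l r) else 0)"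
  proof -
    have "?p \<in> Av [2,3,1] \<longleftrightarrow> is_path (Node l r)"
      using is_perm_in_Av_iff[OF is_perm_tree_perm] is_path_iff_avoids_231 by blast
    then show ?thesis by auto
  qed
  have "M ?p = max (Max (insert 0 ?A)) (max (Max (insert 0 ?B)) (Max (insert 0 ?C)))"
    unfolding M_eq_Max_r_tilde_set e by (simp add: Max_insert_0_Un finite_r_tilde_set)
  also have "\<dots> = max (max_path_subtree l) (max (if is_path (Node l r) then size (Node l r) else 0) (max_path_subtree r))"
    unfolding s using Node.IH by (simp add: M_eq_Max_r_tilde_set)
  also have "\<dots> = max_path_subtree (Node l r)" by (simp only: max_path_subtree.simps max.commute[of _ "max_path_subtree r"])
  finally show ?case .
qed

section \<open>The mean size of the largest path subtree\<close>

definition mean_max_path_subtree :: "nat \<Rightarrow> real" where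
  "mean_max_path_subtree n = (\<Sum>t\<in>trees n. real (max_path_subtree t)) / real (catalan n)"

lemma EM_eq_mean_max_path_subtree: "EM n = mean_max_path_subtree n"
proof -
  have bij: "bij_betw tree_perm (trees n) (Av_n n [1,3,2])"
    by (rule bij_betw_tree_perm)
  have "(\<Sum>p\<in>Av_n n [1,3,2]. real (M p)) = (\<Sum>t\<in>trees n. real (M (tree_perm t)))"
    by (rule sum.reindex_bij_betw[OF bij, symmetric])
  moreover have "card (Av_n n [1,3,2]) = catalan n"
    using bij_betw_same_card[OF bij] by (simp add: catalan_def)
  ultimately show ?thesis
    by (simp add: EM_def mean_max_path_subtree_def M_tree_perm)
qed

lemma max_path_subtree_le_sum_counts:
  assumes "size t \<le> n" "1 \<le> K"
  shows "max_path_subtree t \<le> (K - 1) + (\<Sum>k\<in>{K..n}. count_path_subtrees k t)"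
proof (cases "max_path_subtree t < K")
  case False
  let ?s = "max_path_subtree t"
  have "(\<Sum>k\<in>{K..?s}. 1) \<le> (\<Sum>k\<in>{K..?s}. count_path_subtrees k t)"
    by (rule sum_mono) (use count_path_subtrees_pos_iff assms(2) in auto)
  also have "\<dots> \<le> (\<Sum>k\<in>{K..n}. count_path_subtrees k t)"
    by (rule sum_mono2) (use max_path_subtree_le_size[of t] assms(1) in auto)
  finally show ?thesis using False by simp
qed simp

lemma sum_max_path_subtree_le:
  assumes "1 \<le> K"
  shows "(\<Sum>t\<in>trees n. real (max_path_subtree t))
    \<le> real (K - 1) * real (catalan n) + (\<Sum>k\<in>{K..n}. real (path_count n k))"
proof -
  have "(\<Sum>t\<in>trees n. real (max_path_subtree t))
      \<le> (\<Sum>t\<in>trees n. real (K - 1) + (\<Sum>k\<in>{K..n}. real (count_path_subtrees k t)))"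
  proof (rule sum_mono)
    fix t assume "t \<in> trees n"
    then have "max_path_subtree t \<le> (K - 1) + (\<Sum>k\<in>{K..n}. count_path_subtrees k t)"
      using assms by (intro max_path_subtree_le_sum_counts) (auto simp: trees_def)
    then show "real (max_path_subtree t) \<le> real (K - 1) + (\<Sum>k\<in>{K..n}. real (count_path_subtrees k t))"
      by (metis of_nat_add of_nat_le_iff of_nat_sum)
  qed
  also have "\<dots> = real (K - 1) * real (catalan n) + (\<Sum>k\<in>{K..n}. real (path_count n k))"
    by (simp add: sum.distrib catalan_def path_count_def sum.swap[of _ "{K..n}"])
  finally show ?thesis .
qed

lemma path_count_le_catalan:
  assumes "1 \<le> k" "k \<le> n"
  shows "real (path_count n k) * (2 * 2 ^ k * (real (n - k) + 1)^2) \<le> (real n + 1)^3 * real (catalan n)"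
proof -
  obtain m where n: "n = k + m" using assms le_Suc_ex by blast
  have "real (path_count n k) * (2 ^ (k - 1) * (2 * 2 ^ k * (real (n - k) + 1)^2))
      = 2 ^ (k - 1) * (4 ^ k * (real m + 1)^3 * real (catalan m))"
  proof -
    have "(4::real) ^ k = 2 ^ k * 2 ^ k" by (simp flip: power_mult_distrib)
    moreover have "(2::real) ^ k = 2 * 2 ^ (k - 1)" using assms(1) by (simp flip: power_Suc)
    ultimately show ?thesis
      using assms(1) by (simp add: path_count_eq n power2_eq_square power3_eq_cube algebra_simps)
  qed
  also have "\<dots> \<le> 2 ^ (k - 1) * ((real n + 1)^3 * real (catalan n))"
    using catalan_add_ge_cube[of k m] by (simp add: n add.commute)
  finally show ?thesis by (simp add: mult.assoc)
qed

text \<open>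
  For \<open>k \<le> (n+1)/2\<close> the left-hand side is \<open>O(n 2^(-k))\<close>; for larger \<open>k\<close> it is
  superpolynomially small.
\<close>
lemma cube_div_two_pow_le:
  assumes "1 \<le> k" "k \<le> n"
  shows "(real n + 1)^3 / (2 * 2^k * (real (n - k) + 1)^2)
    \<le> 2 * (real n + 1) * (1/2)^k + (real n + 1)^3 / 2 powr ((real n + 1) / 2)"
proof -
  let ?d = "real (n - k) + 1"
  show ?thesis
  proof (cases "2 * k \<le> n + 1")
    case True
    then have "(real n + 1)^2 \<le> (2 * ?d)^2"
      using assms by (intro power_mono) (auto simp: of_nat_diff)
    have "(real n + 1)^3 = (real n + 1) * (real n + 1)^2"
      by (simp add: power3_eq_cube power2_eq_square)
    also have "\<dots> \<le> (real n + 1) * (2 * ?d)^2"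
      using \<open>(real n + 1)^2 \<le> (2 * ?d)^2\<close> by (intro mult_left_mono) auto
    also have "\<dots> = (real n + 1) * (4 * ?d^2)"
      by (simp add: power2_eq_square algebra_simps)
    finally have cube: "(real n + 1)^3 \<le> (real n + 1) * (4 * ?d^2)" .
    have eq: "2 * (real n + 1) * (1/2)^k * (2 * 2^k * ?d^2) = (real n + 1) * (4 * ?d^2)"
      by (simp add: power_one_over)
    have pos: "(0::real) < 2 * 2^k * ?d^2" by simp
    have "(real n + 1)^3 / (2 * 2^k * ?d^2) \<le> 2 * (real n + 1) * (1/2)^k"
      by (simp only: pos_divide_le_eq[OF pos] eq) (rule cube)
    moreover have "0 \<le> (real n + 1)^3 / 2 powr ((real n + 1) / 2)" by simp
    ultimately show ?thesis by linarith
  next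
    case False
    have "1 \<le> ?d^2" by (simp add: one_le_power)
    then have "(2::real)^k * 1 \<le> 2^k * (2 * ?d^2)"
      by (intro mult_left_mono) (linarith, simp)
    then have "(2::real)^k \<le> 2 * 2^k * ?d^2" by (simp add: ac_simps)
    then have "(real n + 1)^3 / (2 * 2^k * ?d^2) \<le> (real n + 1)^3 / 2^k"
      by (intro divide_left_mono) auto
    also have "\<dots> \<le> (real n + 1)^3 / 2 powr ((real n + 1) / 2)"
    proof (intro divide_left_mono)
      have "2 powr ((real n + 1) / 2) \<le> 2 powr (real k)" using False by (intro powr_mono) auto
      then show "2 powr ((real n + 1) / 2) \<le> 2^k" by (simp add: powr_realpow)
    qed auto
    finally have "(real n + 1)^3 / (2 * 2^k * ?d^2) \<le> (real n + 1)^3 / 2 powr ((real n + 1) / 2)" .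
    moreover have "0 \<le> 2 * (real n + 1) * (1/2::real)^k" by simp
    ultimately show ?thesis by linarith
  qed
qed

lemma path_count_div_catalan_le:
  assumes "1 \<le> k" "k \<le> n"
  shows "real (path_count n k) / real (catalan n)
    \<le> 2 * (real n + 1) * (1/2)^k + (real n + 1)^3 / 2 powr ((real n + 1) / 2)"
proof -
  have "real (path_count n k) / real (catalan n) \<le> (real n + 1)^3 / (2 * 2^k * (real (n - k) + 1)^2)"
    using path_count_le_catalan[OF assms] catalan_pos[of n] by (simp add: field_simps)
  also have "\<dots> \<le> 2 * (real n + 1) * (1/2)^k + (real n + 1)^3 / 2 powr ((real n + 1) / 2)"
    by (rule cube_div_two_pow_le[OF assms])
  finally show ?thesis .
qed

lemma sum_power_half_le: "(\<Sum>k\<in>{K..n}. (1/2::real)^k) \<le> 2 * (1/2)^K"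
  by (auto simp: sum_gp)

lemma sum_path_count_div_catalan_le:
  assumes "1 \<le> K" "1 \<le> n" "real n \<le> 2 ^ K"
  shows "(\<Sum>k\<in>{K..n}. real (path_count n k) / real (catalan n))
    \<le> 8 + real n * (real n + 1)^3 / 2 powr ((real n + 1) / 2)"
proof -
  let ?E = "(real n + 1)^3 / 2 powr ((real n + 1) / 2)"
  have "(\<Sum>k\<in>{K..n}. real (path_count n k) / real (catalan n))
      \<le> (\<Sum>k\<in>{K..n}. 2 * (real n + 1) * (1/2)^k + ?E)"
    by (rule sum_mono) (use path_count_div_catalan_le assms(1) in auto)
  also have "\<dots> = 2 * (real n + 1) * (\<Sum>k\<in>{K..n}. (1/2)^k) + real (card {K..n}) * ?E"
    by (simp add: sum.distrib sum_distrib_left)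
  also have "\<dots> \<le> 2 * (real n + 1) * (2 * (1 / real n)) + real n * ?E"
  proof (intro add_mono mult_left_mono mult_right_mono)
    have "(1/2::real)^K \<le> 1 / real n"
      using assms(2,3) by (simp add: field_simps power_one_over)
    then show "(\<Sum>k\<in>{K..n}. (1/2::real)^k) \<le> 2 * (1 / real n)"
      using sum_power_half_le[of K n] by simp
  qed (use assms(1) in auto)
  also have "\<dots> \<le> 8 + real n * ?E"
    using assms(2) by (simp add: field_simps)
  finally show ?thesis by (simp only: times_divide_eq_right)
qed

lemma mean_max_path_subtree_le:
  assumes "2 \<le> n"
  shows "mean_max_path_subtree n
    \<le> log 2 (real n) + 8 + real n * (real n + 1)^3 / 2 powr ((real n + 1) / 2)"
proof -
  define K where "K = nat \<lceil>log 2 n\<rceil>"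
  have log_pos: "log 2 n > 0" using assms by simp
  then have "1 \<le> \<lceil>log 2 n\<rceil>" by (simp add: order.strict_implies_order zero_less_ceiling)
  then have K: "1 \<le> K" "real K - 1 \<le> log 2 n" "real K = of_int \<lceil>log 2 n\<rceil>"
    by (auto simp: K_def le_nat_iff)
  have "2 powr log 2 n \<le> 2 powr real K" by (intro powr_mono) (auto simp: K(3))
  then have "real n \<le> 2 ^ K" using assms by (simp add: powr_realpow)
  have "mean_max_path_subtree n
      \<le> (real (K - 1) * real (catalan n) + (\<Sum>k\<in>{K..n}. real (path_count n k))) / real (catalan n)"
    unfolding mean_max_path_subtree_def using sum_max_path_subtree_le[OF K(1), of n] catalan_pos[of n]
    by (intro divide_right_mono) auto
  also have "\<dots> = real (K - 1) + (\<Sum>k\<in>{K..n}. real (path_count n k) / real (catalan n))"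
    using catalan_pos[of n] by (simp add: add_divide_distrib sum_divide_distrib)
  also have "\<dots> \<le> log 2 (real n) + 8 + real n * (real n + 1)^3 / 2 powr ((real n + 1) / 2)"
    using sum_path_count_div_catalan_le[OF K(1) _ \<open>real n \<le> 2 ^ K\<close>] K(1,2) assms
    by (simp add: of_nat_diff)
  finally show ?thesis .
qed

lemma mean_max_path_subtree_ge_moments:
  assumes "1 \<le> k" "k \<le> n"
  shows "real k * (real (path_count n k))^2
      / ((real (path_count n k) + real (path_pair_count n k)) * real (catalan n))
    \<le> mean_max_path_subtree n"
proof -
  let ?N = "\<lambda>t. real (count_path_subtrees k t)"
  let ?S = "{t \<in> trees n. 1 \<le> count_path_subtrees k t}"
  let ?A = "real (path_count n k)" and ?B = "real (path_pair_count n k)"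
  have "path_count n k > 0"
    using assms catalan_pos[of "n - k"] by (simp add: path_count_eq)
  then have A_pos: "?A > 0" by simp
  have on_S: "(\<Sum>t\<in>trees n. f t) = (\<Sum>t\<in>?S. f t)" if "\<And>t. f t \<noteq> 0 \<Longrightarrow> 1 \<le> count_path_subtrees k t"
    for f :: "tree \<Rightarrow> real"
    using that by (intro sum.mono_neutral_right) (auto simp: finite_trees)
  have "(\<Sum>t\<in>trees n. ?N t) = (\<Sum>t\<in>?S. ?N t)"
    by (rule on_S) simp
  then have sum_N: "(\<Sum>t\<in>?S. ?N t) = ?A"
    by (simp add: path_count_def)
  have square: "(?N t)^2 = real (count_path_subtrees k t * (count_path_subtrees k t - 1)) + ?N t" for t
    by (cases "count_path_subtrees k t") (simp_all add: power2_eq_square algebra_simps)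
  have "(\<Sum>t\<in>trees n. (?N t)^2) = (\<Sum>t\<in>?S. (?N t)^2)"
    by (rule on_S) simp
  then have sum_N2: "(\<Sum>t\<in>?S. (?N t)^2) = ?A + ?B"
    by (simp only: square sum.distrib path_count_def path_pair_count_def of_nat_sum add.commute)
  have "?A^2 \<le> (?A + ?B) * real (card ?S)"
    using Cauchy_Schwarz_ineq_sum[of ?N "\<lambda>_. 1" ?S] sum_N sum_N2 by simp
  then have card_S: "?A^2 / (?A + ?B) \<le> real (card ?S)"
    using A_pos by (simp add: divide_le_eq mult.commute)
  have "real k * real (card ?S) = (\<Sum>t\<in>?S. real k)" by simp
  also have "\<dots> \<le> (\<Sum>t\<in>?S. real (max_path_subtree t))"
    by (rule sum_mono) (use count_path_subtrees_pos_iff in auto)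
  also have "\<dots> \<le> (\<Sum>t\<in>trees n. real (max_path_subtree t))"
    by (rule sum_mono2) (auto simp: finite_trees)
  finally have "real k * (?A^2 / (?A + ?B)) \<le> (\<Sum>t\<in>trees n. real (max_path_subtree t))"
    using card_S by (smt (verit) mult_left_mono of_nat_0_le_iff)
  then have "real k * (?A^2 / (?A + ?B)) / real (catalan n)
      \<le> (\<Sum>t\<in>trees n. real (max_path_subtree t)) / real (catalan n)"
    by (intro divide_right_mono) auto
  then show ?thesis
    unfolding mean_max_path_subtree_def by (simp only: times_divide_eq_right divide_divide_eq_left)
qed

lemma one_div_le_moment_ratio:
  fixes A B c X Y :: real
  assumes "0 < A" "0 \<le> B" "0 < c" "0 < X + Y" "c \<le> A * X" "B * c \<le> A^2 * Y"
  shows "1 / (X + Y) \<le> A^2 / ((A + B) * c)"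
proof -
  have "A * c \<le> A * (A * X)" using assms by (intro mult_left_mono) auto
  then have "(A + B) * c \<le> A^2 * (X + Y)"
    using assms(6) by (simp add: power2_eq_square algebra_simps)
  then show ?thesis
    using assms by (simp add: divide_simps mult.commute)
qed

lemma path_count_twice_plus:
  "1 \<le> k \<Longrightarrow> real (path_count (2 * k + m) k) = 2 ^ (k - 1) * (real (k + m) + 1) * real (catalan (k + m))"
  by (simp add: path_count_eq algebra_simps)

lemma catalan_le_path_count:
  assumes "1 \<le> k"
  shows "real (catalan (2 * k + m)) \<le> real (path_count (2 * k + m) k) * (2 * 2 ^ k / (real (k + m) + 1))"
proof -
  have two_pow: "(2::real) ^ k = 2 * 2 ^ (k - 1)"
    using assms by (simp flip: power_Suc)
  have "(2::real) ^ (k - 1) * (2 * 2 ^ k) = 2 ^ k * 2 ^ k"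
    by (simp only: two_pow ac_simps)
  also have "\<dots> = 4 ^ k" by (simp flip: power_mult_distrib)
  finally have four_pow: "(2::real) ^ (k - 1) * (2 * 2 ^ k) = 4 ^ k" .
  have "real (path_count (2 * k + m) k) * (2 * 2 ^ k / (real (k + m) + 1))
      = 2 ^ (k - 1) * (2 * 2 ^ k) * real (catalan (k + m))"
    unfolding path_count_twice_plus[OF assms] by (simp add: field_simps)
  then have "real (path_count (2 * k + m) k) * (2 * 2 ^ k / (real (k + m) + 1)) = 4 ^ k * real (catalan (k + m))"
    by (simp only: four_pow)
  moreover have "real (catalan (2 * k + m)) \<le> 4 ^ k * real (catalan (k + m))"
    using catalan_add_le[of "k + m" k] by (simp add: add.commute add.left_commute mult_2)
  ultimately show ?thesis by simp
qed

lemma path_pair_count_le: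
  assumes "1 \<le> k"
  shows "real (path_pair_count (2 * k + m) k) * real (catalan (2 * k + m))
    \<le> (real (path_count (2 * k + m) k))^2 * (4 / (4 - 6 / (real m + 2)))^k"
proof -
  define q where "q = 4 - 6 / (real m + 2)"
  have "6 / (real m + 2) \<le> 3" by (simp add: field_simps)
  then have q_pos: "0 < q" by (simp add: q_def)
  have cat: "real (catalan (2 * k + m)) \<le> 4 ^ k * real (catalan (k + m))"
    using catalan_add_le[of "k + m" k] by (simp add: add.commute add.left_commute mult_2)
  have "real (path_pair_count (2 * k + m) k) = 4 ^ (k - 1) * ((real m + 1) * real m) * real (catalan m)"
    using assms by (simp add: path_pair_count_eq algebra_simps)
  also have "\<dots> \<le> 4 ^ (k - 1) * (real (k + m) + 1)^2 * real (catalan m)"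
    by (intro mult_left_mono mult_right_mono) (simp_all add: power2_eq_square algebra_simps)
  finally have "real (path_pair_count (2 * k + m) k) * real (catalan (2 * k + m))
      \<le> 4 ^ (k - 1) * (real (k + m) + 1)^2 * real (catalan m) * (4 ^ k * real (catalan (k + m)))"
    using cat by (intro mult_mono) auto
  also have "\<dots> = 4 ^ (k - 1) * (real (k + m) + 1)^2 * real (catalan (k + m)) * (4 ^ k * real (catalan m))"
    by (simp only: ac_simps)
  also have "\<dots> \<le> 4 ^ (k - 1) * (real (k + m) + 1)^2 * real (catalan (k + m)) * (real (catalan (k + m)) * (4 / q)^k)"
  proof (intro mult_left_mono)
    have "q ^ k * real (catalan m) * (4 / q)^k \<le> real (catalan (k + m)) * (4 / q)^k"
      using catalan_add_ge[of m k] q_pos by (intro mult_right_mono) (auto simp: q_def add.commute)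
    moreover have "q ^ k * (4 / q)^k = 4 ^ k" using q_pos by (simp flip: power_mult_distrib)
    ultimately show "4 ^ k * real (catalan m) \<le> real (catalan (k + m)) * (4 / q)^k"
      by (simp add: ac_simps)
  qed simp
  also have "\<dots> = (real (path_count (2 * k + m) k))^2 * (4 / q)^k"
  proof -
    have "(4::real) ^ (k - 1) = 2 ^ (k - 1) * 2 ^ (k - 1)" by (simp flip: power_mult_distrib)
    then show ?thesis
      unfolding path_count_twice_plus[OF assms] by (simp add: power2_eq_square ac_simps)
  qed
  finally show ?thesis by (simp add: q_def)
qed

lemma mean_max_path_subtree_ge_nat:
  assumes "1 \<le> k"
  shows "real k / (2 * 2 ^ k / (real (k + m) + 1) + (4 / (4 - 6 / (real m + 2)))^k)
    \<le> mean_max_path_subtree (2 * k + m)"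
proof -
  let ?n = "2 * k + m"
  have "6 / (real m + 2) \<le> 3" by (simp add: field_simps)
  then have "0 < (4 / (4 - 6 / (real m + 2)) :: real)^k" by simp
  moreover have "0 < real (path_count ?n k)"
    using path_count_twice_plus[OF assms] catalan_pos[of "k + m"] by simp
  ultimately have "1 / (2 * 2 ^ k / (real (k + m) + 1) + (4 / (4 - 6 / (real m + 2)))^k)
      \<le> (real (path_count ?n k))^2 / ((real (path_count ?n k) + real (path_pair_count ?n k)) * real (catalan ?n))"
    using catalan_pos[of ?n] catalan_le_path_count[OF assms] path_pair_count_le[OF assms]
    by (intro one_div_le_moment_ratio) (auto simp: add_pos_pos)
  then have "real k * (1 / (2 * 2 ^ k / (real (k + m) + 1) + (4 / (4 - 6 / (real m + 2)))^k))
      \<le> real k * (real (path_count ?n k))^2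
        / ((real (path_count ?n k) + real (path_pair_count ?n k)) * real (catalan ?n))"
    by (simp add: mult_left_mono times_divide_eq_right[symmetric] del: times_divide_eq_right)
  also have "\<dots> \<le> mean_max_path_subtree ?n"
    using assms by (intro mean_max_path_subtree_ge_moments) auto
  finally show ?thesis by simp
qed

text \<open>The previous bound with \<open>k = \<lfloor>x\<rfloor>\<close>, each term estimated monotonically in \<open>k\<close>.\<close>
lemma mean_max_path_subtree_ge:
  fixes x :: real
  assumes "1 \<le> x" "2 * x < real n"
  shows "(x - 1) / (2 * 2 powr x / (real n - x + 1) + (4 / (4 - 6 / (real n - 2 * x + 2))) powr x)
    \<le> mean_max_path_subtree n"
proof -
  define k where "k = nat \<lfloor>x\<rfloor>"
  have k: "1 \<le> k" "real k \<le> x" "x - 1 \<le> real k"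
    using assms(1) by (auto simp: k_def le_nat_iff le_floor_iff)
  define m where "m = n - 2 * k"
  have n: "n = 2 * k + m" using k assms(2) by (simp add: m_def)
  define q q0 where "q = 4 - 6 / (real m + 2)" and "q0 = 4 - 6 / (real n - 2 * x + 2)"
  have m_ge: "real n - 2 * x + 2 \<le> real m + 2" using k n by (simp add: m_def)
  have q0_gt_1: "1 < q0" using assms(2) by (simp add: q0_def field_simps)
  have q_ge: "q0 \<le> q"
    using m_ge assms(2) by (simp add: q_def q0_def divide_left_mono)
  have X_le: "2 * 2 ^ k / (real (k + m) + 1) \<le> 2 * 2 powr x / (real n - x + 1)"
  proof (rule frac_le)
    show "2 * 2 ^ k \<le> 2 * 2 powr x"
      using k(2) by (simp add: powr_realpow[symmetric] powr_mono)
  qed (use k n assms in auto)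
  have Y_le: "(4 / q)^k \<le> (4 / q0) powr x"
  proof -
    have "(4 / q)^k = (4 / q) powr real k" using q_ge q0_gt_1 by (simp add: powr_realpow)
    also have "\<dots> \<le> (4 / q) powr x"
      using q_ge q0_gt_1 k(2) by (intro powr_mono) (auto simp: q_def)
    also have "\<dots> \<le> (4 / q0) powr x"
      using q_ge q0_gt_1 assms(1) by (intro powr_mono2 divide_left_mono) auto
    finally show ?thesis .
  qed
  have pos: "0 < 2 * 2 ^ k / (real (k + m) + 1) + (4 / q)^k"
    using q_ge q0_gt_1 by (intro add_pos_pos) auto
  have "(x - 1) / (2 * 2 powr x / (real n - x + 1) + (4 / q0) powr x)
      \<le> real k / (2 * 2 ^ k / (real (k + m) + 1) + (4 / q)^k)"
    using X_le Y_le k pos assms(1) by (intro frac_le) auto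
  also have "\<dots> \<le> mean_max_path_subtree n"
    using mean_max_path_subtree_ge_nat[OF k(1), of m] by (simp add: n q_def)
  finally show ?thesis by (simp add: q0_def)
qed

theorem corollary7:
  shows "EM \<sim>[at_top] (\<lambda>n. log 2 (real n))"
proof -
  define x :: "nat \<Rightarrow> real" where "x = (\<lambda>n. log 2 (real n) - 2 * log 2 (log 2 (real n)))"
  define lower where "lower = (\<lambda>n. (x n - 1)
    / (2 * 2 powr x n / (real n - x n + 1) + (4 / (4 - 6 / (real n - 2 * x n + 2))) powr x n))"
  define upper :: "nat \<Rightarrow> real" where
    "upper = (\<lambda>n. log 2 (real n) + 8 + real n * (real n + 1)^3 / 2 powr ((real n + 1) / 2))"
  have "lower \<sim>[at_top] (\<lambda>n. log 2 (real n))" "upper \<sim>[at_top] (\<lambda>n. log 2 (real n))"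
    unfolding lower_def upper_def x_def by real_asymp+
  moreover have "eventually (\<lambda>n. 1 \<le> x n) at_top" "eventually (\<lambda>n. 2 * x n < real n) at_top"
    unfolding x_def by real_asymp+
  then have "eventually (\<lambda>n. EM n \<in> {lower n..upper n}) at_top"
  proof eventually_elim
    case (elim n)
    then have "2 < real n" by linarith
    then have "2 \<le> n" by simp
    show ?case
      unfolding atLeastAtMost_iff EM_eq_mean_max_path_subtree lower_def upper_def
      using mean_max_path_subtree_ge[OF elim] mean_max_path_subtree_le[OF \<open>2 \<le> n\<close>] by (rule conjI)
  qed
  ultimately show ?thesis
    by (rule asymp_equiv_sandwich_real)
qed

end
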